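(* Let $n\ge1$, $p>0$, $\alpha>n$, $0<\rho<1$, let $f=1+\phi$ be holomorphic in $\mathbb{B}_n$ with $\|\phi\|_{C^1(\overline{\mathbb{B}_\rho})}$ sufficiently small (where $\mathbb{B}_\rho=\{|z|<\rho\}$), and let $u(z)=|f(z)|^p(1-|z|^2)^\alpha$, $A_t=\{u>t\}$. Assume $t$ ranges over a compact interval $[t_-,t_+]$ such that $0<\rho_-\le\rho_0(t)\le\rho_+<\rho$, where $\rho_0(t)=\sqrt{1-t^{1/\alpha}}$, and that $\partial A_t=\{\rho_t(\omega)\omega:\omega\in\mathbb{S}^{2n-1}\}$ with $\rho_t$ taking values in $[\rho_-/2,(\rho_++\rho)/2]$ and $\|\rho_t-\rho_0(t)\|_{W^{1,\infty}(\mathbb{S}^{2n-1})}\le C\|\phi\|_{C^1(\overline{\mathbb{B}_\rho})}$. Then, after possibly shrinking $[t_-,t_+]$, $$|\mathrm{Bar}(A_t)|\le C\|\phi\|_{C^1(\overline{\mathbb{B}_\rho})}\quad\text{for all }t\in[t_-,t_+],$$ where $C=C(n,p,\alpha,\rho_-,\rho_+,\rho)$.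
   Context: $\mathbb{B}_n$ is the unit ball of $\mathbb{C}^n$, $\mathbb{S}^{2n-1}$ its boundary, $d\mu=(1-|z|^2)^{-n-1}d\nu$ the Bergman measure ($d\nu$ Lebesgue). For measurable $E\subset\mathbb{B}_n$ with $0<\mu(E)<\infty$, the holomorphic (Jacimovic–Kalaj) barycenter $\mathrm{Bar}(E)$ is the unique minimizer over $a\in\mathbb{B}_n$ of $L_E(a)=-\int_E\log\frac{(1-|a|^2)(1-|z|^2)}{|1-\langle a,z\rangle|^2}d\mu(z)$. *)

theory Defs
  imports "HOL-Analysis.Analysis"
begin

definition cinner :: "complex ^ 'n \<Rightarrow> complex ^ 'n \<Rightarrow> complex" where
  "cinner a z = (\<Sum>i\<in>UNIV. a $ i * cnj (z $ i))"

definition holo_on :: "(complex ^ 'n) set \<Rightarrow> (complex ^ 'n \<Rightarrow> complex) \<Rightarrow> bool" where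
  "holo_on S f \<longleftrightarrow> (\<forall>z\<in>S. \<exists>D. (f has_derivative D) (at z) \<and> (\<forall>c v. D (c *s v) = c * D v))"

definition c1_norm :: "real \<Rightarrow> (complex ^ 'n \<Rightarrow> complex) \<Rightarrow> real" where
  "c1_norm r f = (SUP z\<in>cball 0 r. norm (f z)) + (SUP z\<in>cball 0 r. onorm (frechet_derivative f (at z)))"

text \<open>W^{1,infinity}(S^{2n-1}) norm bound, realised as sup-norm plus Lipschitz constant
  (with respect to the chordal distance) of the function on the unit sphere.\<close>
definition w1inf_le :: "(complex ^ 'n \<Rightarrow> real) \<Rightarrow> real \<Rightarrow> bool" where
  "w1inf_le g M \<longleftrightarrow> (\<exists>a b. a + b \<le> M \<and> (\<forall>\<omega>\<in>sphere 0 1. \<bar>g \<omega>\<bar> \<le> a) \<and>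
       (\<forall>\<omega>\<in>sphere 0 1. \<forall>\<omega>'\<in>sphere 0 1. \<bar>g \<omega> - g \<omega>'\<bar> \<le> b * dist \<omega> \<omega>'))"

definition bergman_dens :: "complex ^ 'n \<Rightarrow> real" where
  "bergman_dens z = (1 - (norm z)\<^sup>2) powr (- (real CARD('n) + 1))"

definition L_fun :: "(complex ^ 'n) set \<Rightarrow> complex ^ 'n \<Rightarrow> real" where
  "L_fun E a = - (LINT z:E|lborel.
      ln ((1 - (norm a)\<^sup>2) * (1 - (norm z)\<^sup>2) / (cmod (1 - cinner a z))\<^sup>2) * bergman_dens z)"

definition Bar :: "(complex ^ 'n) set \<Rightarrow> complex ^ 'n" where
  "Bar E = (THE a. a \<in> ball 0 1 \<and> (\<forall>b\<in>ball 0 1. L_fun E a \<le> L_fun E b))"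

definition u_fun :: "real \<Rightarrow> real \<Rightarrow> (complex ^ 'n \<Rightarrow> complex) \<Rightarrow> complex ^ 'n \<Rightarrow> real" where
  "u_fun p \<alpha> \<phi> z = (norm (1 + \<phi> z)) powr p * (1 - (norm z)\<^sup>2) powr \<alpha>"

definition A_set :: "real \<Rightarrow> real \<Rightarrow> (complex ^ 'n \<Rightarrow> complex) \<Rightarrow> real \<Rightarrow> (complex ^ 'n) set" where
  "A_set p \<alpha> \<phi> t = {z \<in> ball 0 1. u_fun p \<alpha> \<phi> z > t}"

definition rho0 :: "real \<Rightarrow> real \<Rightarrow> real" where
  "rho0 \<alpha> t = sqrt (1 - t powr (1 / \<alpha>))"

end

theory Submission
  imports Defs "HOL-Complex_Analysis.Cauchy_Integral_Formula"
begin

(* Up to an additive constant, L_E(a) equals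
     F_E(a) = - mu(E) ln (1 - |a|^2) + 2 int_E ln |1 - <a,z>| dmu(z)      (reduced_L E a).
   On a centred ball B_r the integral term is even in a, and concavity of ln bounds it below by
   r^2 mu(B_r) ln (1 - |a|^2); since r < 1 this leaves F_{B_r}(a) >= c |a|^2.  If
   B_{r-delta} <= E <= closed B_{r+delta}, every integral involved differs from its value on B_r
   by O(delta) uniformly for small a, so F_E(a) >= c |a|^2 - C delta |a| and F_E stays midpoint
   convex near 0.  Hence F_E has a unique minimiser, and it has norm O(delta).  The radial
   description of the frontier of A_t places A_t between such balls, with r = rho0(t) and
   delta = K ||phi||_{C^1}. *)

lemma norm_cinner_le: "norm (cinner a z) \<le> norm a * norm (z::complex^'n)"
proof -
  have "norm (cinner a z) \<le> (\<Sum>i\<in>UNIV. norm (a$i) * norm (z$i))"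
    unfolding cinner_def by (rule order_trans[OF norm_sum]) (simp add: norm_mult)
  also have "\<dots> = (\<Sum>i\<in>UNIV. \<bar>norm (a$i)\<bar> * \<bar>norm (z$i)\<bar>)" by simp
  also have "\<dots> \<le> L2_set (\<lambda>i. norm (a$i)) UNIV * L2_set (\<lambda>i. norm (z$i)) UNIV"
    by (rule L2_set_mult_ineq)
  also have "\<dots> = norm a * norm z" by (simp add: norm_vec_def)
  finally show ?thesis .
qed

lemma norm_cinner_le_mult:
  "norm a \<le> A \<Longrightarrow> norm z \<le> R \<Longrightarrow> 0 \<le> R \<Longrightarrow> norm (cinner a z) \<le> A * R"
  by (rule order_trans[OF norm_cinner_le]) (intro mult_mono, auto intro: order_trans[OF norm_ge_zero])

lemma norm_cinner_less_1: "norm a < 1 \<Longrightarrow> norm z \<le> 1 \<Longrightarrow> norm (cinner a z) < 1"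
  using norm_cinner_le_mult[of a "norm a" z 1] by simp

lemma cinner_zero_left [simp]: "cinner 0 z = 0"
  unfolding cinner_def by simp

lemma cinner_add_left: "cinner (a + b) z = cinner a z + cinner b z"
  unfolding cinner_def by (simp add: distrib_right sum.distrib)

lemma cinner_diff_left: "cinner (a - b) z = cinner a z - cinner b z"
  unfolding cinner_def by (simp add: left_diff_distrib sum_subtractf)

lemma cinner_minus_left: "cinner (- a) z = - cinner a z"
  unfolding cinner_def by (simp add: sum_negf)

lemma cinner_minus_right: "cinner a (- z) = - cinner a z"
  unfolding cinner_def by (simp add: sum_negf)

lemma cinner_scaleR_left: "cinner (c *\<^sub>R a) z = of_real c * cinner a z"
proof -
  have "(c *\<^sub>R a) $ i = of_real c * a $ i" for i
    unfolding vector_scaleR_component by (rule scaleR_conv_of_real)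
  then show ?thesis unfolding cinner_def by (simp add: sum_distrib_left mult.assoc)
qed

lemma cinner_midpoint_left: "cinner ((a + b) /\<^sub>R 2) z = (cinner a z + cinner b z) / 2"
  using cinner_scaleR_left[of "inverse 2" "a + b" z] by (simp add: cinner_add_left field_simps)

lemma continuous_on_cinner: "continuous_on S (cinner (a::complex^'n))"
  unfolding cinner_def[abs_def] by (intro continuous_intros)

lemma borel_measurable_cinner: "cinner (a::complex^'n) \<in> borel_measurable borel"
  using continuous_on_cinner[of UNIV a] by (intro borel_measurable_continuous_onI) simp

section \<open>Estimates for \<open>ln |1 - v|\<close>\<close>

lemma abs_ln_norm_one_minus_le:
  fixes v :: complex
  assumes "norm v < 1"
  shows "\<bar>ln (cmod (1 - v))\<bar> \<le> norm v / (1 - norm v)"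
proof -
  have lo: "1 - norm v \<le> cmod (1 - v)" by (metis norm_one norm_triangle_ineq2)
  have hi: "cmod (1 - v) \<le> 1 + norm v" by (metis norm_one norm_triangle_ineq4)
  have pos: "0 < 1 - norm v" using assms by simp
  have "ln (cmod (1 - v)) \<le> ln (1 + norm v)" using lo hi pos by (intro ln_mono) auto
  also have "\<dots> \<le> norm v" by (intro ln_add_one_self_le_self) simp
  also have "\<dots> \<le> norm v / (1 - norm v)" using pos assms
    by (simp add: le_divide_eq mult_left_le)
  finally have upper: "ln (cmod (1 - v)) \<le> norm v / (1 - norm v)" .
  have "ln (1 / (1 - norm v)) \<le> 1 / (1 - norm v) - 1" using pos by (intro ln_le_minus_one) simp
  then have "- (norm v / (1 - norm v)) \<le> ln (1 - norm v)"
    using pos by (simp add: ln_div field_simps)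
  also have "\<dots> \<le> ln (cmod (1 - v))" using lo pos by (intro ln_mono) auto
  finally show ?thesis using upper by linarith
qed

lemma abs_ln_diff_le:
  fixes x y c :: real
  assumes "0 < c" "c \<le> x" "c \<le> y"
  shows "\<bar>ln x - ln y\<bar> \<le> \<bar>x - y\<bar> / c"
proof -
  have "ln u - ln w \<le> \<bar>u - w\<bar> / c" if "c \<le> u" "c \<le> w" for u w
  proof -
    have "ln u - ln w = ln (u / w)" using that assms by (simp add: ln_div)
    also have "\<dots> \<le> u / w - 1" using that assms by (intro ln_le_minus_one) simp
    also have "\<dots> = (u - w) / w" using that assms by (simp add: field_simps)
    also have "\<dots> \<le> \<bar>u - w\<bar> / c" using that assms by (intro frac_le) auto
    finally show ?thesis .
  qed
  from this[of x y] this[of y x] show ?thesis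
    using assms by (simp add: abs_le_iff abs_minus_commute)
qed

lemma ln_norm_one_minus_lipschitz:
  fixes v w :: complex
  assumes "norm v \<le> 1/2" "norm w \<le> 1/2"
  shows "\<bar>ln (cmod (1 - v)) - ln (cmod (1 - w))\<bar> \<le> 2 * norm (v - w)"
proof -
  have "1/2 \<le> cmod (1 - v)" "1/2 \<le> cmod (1 - w)"
    using assms norm_triangle_ineq2[of 1 v] norm_triangle_ineq2[of 1 w] by simp_all
  then have "\<bar>ln (cmod (1 - v)) - ln (cmod (1 - w))\<bar> \<le> \<bar>cmod (1 - v) - cmod (1 - w)\<bar> / (1/2)"
    by (intro abs_ln_diff_le) auto
  also have "\<dots> \<le> norm (v - w) / (1/2)"
    using norm_triangle_ineq3[of "1 - v" "1 - w"] by (simp add: norm_minus_commute)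
  finally show ?thesis by simp
qed

text \<open>The second difference of \<open>ln |1 - v|\<close> is again of the form \<open>ln |1 - e|\<close>, with \<open>e\<close>
  quadratic in \<open>v - w\<close>: \<open>(1 - v)(1 - w) = (1 - m)\<^sup>2 - d\<^sup>2\<close> for \<open>m = (v + w)/2\<close>, \<open>d = (v - w)/2\<close>.\<close>

lemma ln_norm_midpoint_defect_eq:
  fixes v w :: complex
  assumes "norm v < 1" "norm w < 1"
  shows "ln (cmod (1 - v)) + ln (cmod (1 - w)) - 2 * ln (cmod (1 - (v + w)/2))
       = ln (cmod (1 - ((v - w)/2)^2 / (1 - (v + w)/2)^2))"
proof -
  define m where "m = (v + w)/2"
  define d where "d = (v - w)/2"
  have "norm m < 1" unfolding m_def using assms norm_triangle_ineq[of v w] by (simp add: norm_divide)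
  then have m0: "1 - m \<noteq> 0" by auto
  have v: "1 - v \<noteq> 0" and w: "1 - w \<noteq> 0" using assms by auto
  have "(1 - v) * (1 - w) = (1 - m)^2 - d^2"
    unfolding m_def d_def by (simp add: power2_eq_square field_simps)
  also have "\<dots> = (1 - m)^2 * (1 - d^2 / (1 - m)^2)" using m0 by (simp add: right_diff_distrib)
  finally have eq: "(1 - v) * (1 - w) = (1 - m)^2 * (1 - d^2 / (1 - m)^2)" .
  have ne: "1 - d^2 / (1 - m)^2 \<noteq> 0" using eq v w by auto
  have "ln (cmod (1 - v)) + ln (cmod (1 - w)) = ln (cmod ((1 - v) * (1 - w)))"
    using v w by (simp add: norm_mult ln_mult)
  also have "\<dots> = 2 * ln (cmod (1 - m)) + ln (cmod (1 - d^2 / (1 - m)^2))"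
    using m0 ne by (simp add: eq norm_mult norm_power ln_mult ln_realpow)
  finally show ?thesis unfolding m_def d_def by simp
qed

lemma norm_midpoint_defect_arg_le:
  fixes v w :: complex
  assumes "norm v \<le> \<eta>" "norm w \<le> \<eta>" "\<eta> < 1"
  shows "cmod (((v - w)/2)^2 / (1 - (v + w)/2)^2) \<le> (cmod (v - w))^2 / 4 / (1 - \<eta>)^2"
proof -
  have "norm ((v + w)/2) \<le> \<eta>"
    using assms norm_triangle_ineq[of v w] by (simp add: norm_divide)
  then have lo: "1 - \<eta> \<le> cmod (1 - (v + w)/2)"
    using norm_triangle_ineq2[of 1 "(v + w)/2"] by simp
  moreover have pos: "0 < 1 - \<eta>" using assms by simp
  ultimately have sq: "(1 - \<eta>)^2 \<le> (cmod (1 - (v + w)/2))^2" by (intro power_mono) auto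
  have "cmod (((v - w)/2)^2 / (1 - (v + w)/2)^2) = (cmod (v - w))^2 / 4 / (cmod (1 - (v + w)/2))^2"
    by (simp add: norm_divide norm_power power_divide)
  also have "\<dots> \<le> (cmod (v - w))^2 / 4 / (1 - \<eta>)^2"
    using sq pos lo by (intro divide_left_mono mult_pos_pos) auto
  finally show ?thesis .
qed

lemma abs_ln_norm_midpoint_defect_le:
  fixes v w :: complex
  assumes "norm v \<le> 1/4" "norm w \<le> 1/4"
  shows "\<bar>ln (cmod (1 - v)) + ln (cmod (1 - w)) - 2 * ln (cmod (1 - (v + w)/2))\<bar> \<le> (cmod (v - w))^2"
proof -
  define e where "e = ((v - w)/2)^2 / (1 - (v + w)/2)^2"
  have "cmod e \<le> (cmod (v - w))^2 / 4 / (1 - 1/4)^2"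
    unfolding e_def using assms by (intro norm_midpoint_defect_arg_le) auto
  then have e_le: "cmod e \<le> (cmod (v - w))^2 * (4/9)" by (simp add: power2_eq_square)
  have "cmod (v - w) \<le> 1/2" using assms norm_triangle_ineq4[of v w] by simp
  then have "(cmod (v - w))^2 \<le> (1/2)^2" by (intro power_mono) auto
  then have "(cmod (v - w))^2 \<le> 1/4" by (simp add: power_divide)
  then have e_small: "cmod e \<le> 1/9" using e_le by linarith
  have "\<bar>ln (cmod (1 - e))\<bar> \<le> cmod e / (1 - cmod e)"
    using e_small by (intro abs_ln_norm_one_minus_le) simp
  also have "\<dots> \<le> 2 * cmod e" using e_small by (simp add: divide_le_eq algebra_simps mult_left_le)
  also have "\<dots> \<le> (cmod (v - w))^2" using e_le zero_le_power2[of "cmod (v - w)"] by linarith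
  finally show ?thesis using assms unfolding e_def by (simp add: ln_norm_midpoint_defect_eq)
qed

lemma ln_norm_midpoint_defect_ge:
  fixes v w :: complex
  assumes "norm v \<le> \<eta>" "norm w \<le> \<eta>" "\<eta> \<le> 1/4"
  shows "- ((cmod (v - w))^2 / (4 * (1 - 2 * \<eta>)))
           \<le> ln (cmod (1 - v)) + ln (cmod (1 - w)) - 2 * ln (cmod (1 - (v + w)/2))"
proof -
  define e where "e = ((v - w)/2)^2 / (1 - (v + w)/2)^2"
  define D where "D = (cmod (v - w))^2 / 4"
  define q where "q = D / (1 - \<eta>)^2"
  have \<eta>0: "0 \<le> \<eta>" using assms(1) norm_ge_zero order_trans by blast
  have pos: "0 < (1 - \<eta>)^2" using assms by simp
  have q0: "0 \<le> q" unfolding q_def D_def by simp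
  have e_le: "cmod e \<le> q" unfolding e_def q_def D_def
    using assms by (intro norm_midpoint_defect_arg_le) auto
  have "cmod (v - w) \<le> 2 * \<eta>" using assms norm_triangle_ineq4[of v w] by simp
  then have "(cmod (v - w))^2 \<le> (2 * \<eta>)^2" by (intro power_mono) auto
  then have D_le: "D \<le> \<eta>^2" unfolding D_def by (simp add: power_mult_distrib)
  have "(3 * \<eta>)^2 \<le> (1 - \<eta>)^2" using assms \<eta>0 by (intro power_mono) auto
  then have "q \<le> 1/9" unfolding q_def using D_le pos
    by (simp add: divide_le_eq power_mult_distrib)
  have "- (cmod e / (1 - cmod e)) \<le> ln (cmod (1 - e))"
    using abs_ln_norm_one_minus_le[of e] e_le \<open>q \<le> 1/9\<close> by (simp add: abs_le_iff)
  moreover have "cmod e / (1 - cmod e) \<le> q / (1 - q)"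
    using e_le q0 \<open>q \<le> 1/9\<close> by (intro frac_le) auto
  moreover have "q / (1 - q) = D / ((1 - \<eta>)^2 - D)"
    unfolding q_def using pos by (simp add: field_simps)
  moreover have "D / ((1 - \<eta>)^2 - D) \<le> D / (1 - 2 * \<eta>)"
    using D_le assms unfolding D_def by (intro divide_left_mono) (auto simp: power2_diff)
  ultimately have "- (D / (1 - 2 * \<eta>)) \<le> ln (cmod (1 - e))" by linarith
  then show ?thesis using assms unfolding e_def D_def
    by (simp add: ln_norm_midpoint_defect_eq divide_divide_eq_left)
qed

lemma ln_one_minus_mult_ge:
  fixes s t :: real
  assumes "0 \<le> s" "s < 1" "0 \<le> t" "t \<le> 1"
  shows "t * ln (1 - s) \<le> ln (1 - t * s)"
proof -
  have "(1 - t) * ln 1 + t * ln (1 - s) \<le> ln ((1 - t) *\<^sub>R 1 + t *\<^sub>R (1 - s))"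
    using assms by (intro concave_onD[OF ln_concave]) auto
  then show ?thesis by (simp add: algebra_simps)
qed

lemma ln_one_minus_norm_sq_midpoint_defect:
  fixes a b :: "'a::real_inner"
  assumes "norm a < 1" "norm b < 1"
  shows "norm (a - b)^2 / 2
           \<le> - ln (1 - norm a ^2) - ln (1 - norm b ^2) + 2 * ln (1 - norm ((a + b) /\<^sub>R 2) ^2)"
proof -
  define x where "x = norm a ^2"
  define y where "y = norm b ^2"
  define xm where "xm = norm ((a + b) /\<^sub>R 2) ^2"
  define dd where "dd = norm (a - b)^2 / 4"
  have x: "0 \<le> x" "x < 1" and y: "0 \<le> y" "y < 1"
    unfolding x_def y_def using assms by (auto simp: power_less_one_iff)
  have "norm (a + b)^2 + norm (a - b)^2 = 2 * norm a ^2 + 2 * norm b ^2"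
    by (simp add: power2_norm_eq_inner inner_add_left inner_add_right inner_diff_left inner_diff_right
        inner_commute)
  moreover have "xm = norm (a + b)^2 / 4" unfolding xm_def by (simp add: power2_eq_square)
  ultimately have "xm + dd = (x + y)/2" unfolding dd_def x_def y_def by simp
  then have par: "1 - xm - dd = 1 - (x + y)/2" by linarith
  have dd0: "0 \<le> dd" and xm0: "0 \<le> xm" unfolding dd_def xm_def by simp_all
  have "(1 - (x + y)/2)^2 - (1 - x) * (1 - y) = ((x - y)/2)^2"
    by (simp add: power2_eq_square algebra_simps divide_simps)
  then have A: "(1 - x) * (1 - y) \<le> (1 - xm - dd)^2"
    unfolding par using zero_le_power2[of "(x - y)/2"] by linarith
  have p1: "0 < 1 - xm - dd" unfolding par using x y by simp
  have "1 - xm - dd \<le> (1 - dd) * (1 - xm)" using dd0 xm0 by (simp add: algebra_simps)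
  then have "(1 - xm - dd)^2 \<le> ((1 - dd) * (1 - xm))^2" using p1 by (intro power_mono) auto
  with A have "ln ((1 - x) * (1 - y)) \<le> ln (((1 - dd) * (1 - xm))^2)"
    using x y by (intro ln_mono) auto
  moreover have "0 < 1 - dd" "0 < 1 - xm" using p1 dd0 xm0 by linarith+
  ultimately have "ln (1 - x) + ln (1 - y) \<le> 2 * ln (1 - dd) + 2 * ln (1 - xm)"
    using x y by (simp add: ln_mult ln_realpow)
  moreover have "ln (1 - dd) \<le> - dd" using \<open>0 < 1 - dd\<close> ln_le_minus_one[of "1 - dd"] by simp
  ultimately show ?thesis unfolding x_def y_def xm_def dd_def by simp
qed

lemma norm_sq_less_1: "norm (x::'a::real_normed_vector) < 1 \<Longrightarrow> (norm x)^2 < 1"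
  by (simp add: power_less_one_iff)

lemma bergman_dens_ge_1: "norm (z::complex^'n) < 1 \<Longrightarrow> 1 \<le> bergman_dens z"
proof -
  assume "norm z < 1"
  then have "0 < 1 - (norm z)^2" "1 - (norm z)^2 \<le> 1" by (auto simp: power_less_one_iff)
  then have "1 powr (- (real CARD('n) + 1)) \<le> (1 - (norm z)^2) powr (- (real CARD('n) + 1))"
    by (intro powr_mono2') auto
  then show ?thesis unfolding bergman_dens_def by simp
qed

lemma bergman_dens_le:
  assumes "norm (z::complex^'n) \<le> R" "R < 1"
  shows "bergman_dens z \<le> (1 - R^2) powr (- (real CARD('n) + 1))"
proof -
  have "0 \<le> R" using assms(1) norm_ge_zero order_trans by blast
  then have "(norm z)^2 \<le> R^2" "0 < 1 - R^2" using assms by (auto intro: power_mono simp: power_less_one_iff)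
  then show ?thesis unfolding bergman_dens_def by (intro powr_mono2') auto
qed

lemma bergman_dens_minus [simp]: "bergman_dens (- z) = bergman_dens z"
  unfolding bergman_dens_def by simp

lemma continuous_on_bergman_dens:
  assumes "R < 1"
  shows "continuous_on (cball 0 R) (bergman_dens :: complex^'n \<Rightarrow> real)"
proof -
  have "\<forall>z\<in>cball (0::complex^'n) R. 0 < 1 - (norm z)^2"
    using assms by (auto simp: power_less_one_iff)
  then show ?thesis unfolding bergman_dens_def[abs_def]
    by (intro continuous_on_powr' continuous_intros) auto
qed

lemma borel_measurable_bergman_dens: "(bergman_dens :: complex^'n \<Rightarrow> real) \<in> borel_measurable borel"
  unfolding bergman_dens_def[abs_def] by measurable

lemma set_integrable_cball:
  fixes f :: "'a::euclidean_space \<Rightarrow> real"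
  assumes "E \<in> sets lborel" "E \<subseteq> cball c R" "continuous_on (cball c R) f"
  shows "set_integrable lborel E f"
proof -
  have "set_integrable lborel (cball c R) f"
    unfolding set_integrable_def using assms(3) by (intro borel_integrable_compact) auto
  then show ?thesis using assms(1,2) by (rule set_integrable_subset)
qed

lemma abs_set_integral_diff_le_shell:
  fixes f :: "'a::euclidean_space \<Rightarrow> real"
  assumes E: "E \<in> sets lborel" and B: "B \<in> sets lborel"
    and sub: "ball 0 r1 \<subseteq> E" "ball 0 r1 \<subseteq> B" "E \<subseteq> cball 0 r2" "B \<subseteq> cball 0 r2"
    and f: "continuous_on (cball 0 r2) f" and M: "\<And>z. z \<in> cball 0 r2 \<Longrightarrow> \<bar>f z\<bar> \<le> M"
  shows "\<bar>(LINT z:E|lborel. f z) - (LINT z:B|lborel. f z)\<bar>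
           \<le> M * (measure lborel (cball (0::'a) r2) - measure lborel (ball (0::'a) r1))"
proof -
  have iE: "integrable lborel (\<lambda>x. indicator E x *\<^sub>R f x)"
    using set_integrable_cball[OF E sub(3) f] unfolding set_integrable_def .
  have iB: "integrable lborel (\<lambda>x. indicator B x *\<^sub>R f x)"
    using set_integrable_cball[OF B sub(4) f] unfolding set_integrable_def .
  have fin: "emeasure lborel (cball (0::'a) r2) < \<infinity>" "emeasure lborel (ball (0::'a) r1) < \<infinity>"
    by (rule emeasure_lborel_cball_finite, rule emeasure_lborel_ball_finite)
  have pointwise: "\<bar>indicator E x *\<^sub>R f x - indicator B x *\<^sub>R f x\<bar>
      \<le> M * (indicator (cball 0 r2) x - indicator (ball 0 r1) x)" for x
  proof -
    consider "x \<in> ball 0 r1" | "x \<in> cball 0 r2 - ball 0 r1" | "x \<notin> cball 0 r2" by blast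
    then show ?thesis
    proof cases
      case 2
      then have "\<bar>indicator E x *\<^sub>R f x - indicator B x *\<^sub>R f x\<bar> \<le> \<bar>f x\<bar>"
        by (auto simp: indicator_def)
      also have "\<dots> \<le> M" using M 2 by blast
      finally show ?thesis using 2 by (simp add: indicator_def)
    qed (use sub in \<open>auto simp: indicator_def\<close>)
  qed
  have "\<bar>(LINT z:E|lborel. f z) - (LINT z:B|lborel. f z)\<bar>
        = \<bar>LINT x|lborel. indicator E x *\<^sub>R f x - indicator B x *\<^sub>R f x\<bar>"
    unfolding set_lebesgue_integral_def using iE iB by (simp add: Bochner_Integration.integral_diff)
  also have "\<dots> \<le> (LINT x|lborel. \<bar>indicator E x *\<^sub>R f x - indicator B x *\<^sub>R f x\<bar>)"
    using integral_norm_bound[of lborel "\<lambda>x. indicator E x *\<^sub>R f x - indicator B x *\<^sub>R f x"] by simp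
  also have "\<dots> \<le> (LINT x|lborel. M * (indicator (cball (0::'a) r2) x - indicator (ball 0 r1) x))"
    using fin iE iB pointwise
    by (intro integral_mono integrable_abs Bochner_Integration.integrable_diff integrable_mult_right
        integrable_real_indicator) auto
  also have "\<dots> = M * (measure lborel (cball (0::'a) r2) - measure lborel (ball (0::'a) r1))"
    using fin by (simp add: Bochner_Integration.integral_diff integrable_real_indicator)
  finally show ?thesis .
qed

lemma set_integral_ball_reflect:
  fixes g :: "'a::euclidean_space \<Rightarrow> real"
  assumes g [measurable]: "g \<in> borel_measurable borel"
  shows "(LINT z:ball 0 r|lborel. g (- z)) = (LINT z:ball 0 r|lborel. g z)"
proof -
  have d: "distr lborel borel (\<lambda>x::'a. - x) = lborel"
  proof -
    have "lborel = density (distr lborel borel (\<lambda>x::'a. 0 + (-1) *\<^sub>R x)) (\<lambda>_. \<bar>-1::real\<bar> ^ DIM('a))"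
      by (rule lborel_affine) simp
    then show ?thesis by (simp add: density_1)
  qed
  have [measurable]: "ball (0::'a) r \<in> sets borel" by simp
  have "(LINT z:ball 0 r|lborel. g z) = (LINT x|distr lborel borel (\<lambda>x::'a. - x). indicator (ball 0 r) x *\<^sub>R g x)"
    unfolding set_lebesgue_integral_def d ..
  also have "\<dots> = (LINT x|lborel. indicator (ball (0::'a) r) (- x) *\<^sub>R g (- x))"
    by (rule integral_distr) auto
  also have "\<dots> = (LINT z:ball 0 r|lborel. g (- z))"
    unfolding set_lebesgue_integral_def by (simp add: indicator_def)
  finally show ?thesis by simp
qed

lemma power_diff_le_mult:
  fixes x y :: real
  assumes "0 \<le> y" "y \<le> x" "x \<le> 1"
  shows "x ^ k - y ^ k \<le> real k * (x - y)"
proof (induction k)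
  case 0 then show ?case by simp
next
  case (Suc k)
  have "x ^ Suc k - y ^ Suc k = x * (x^k - y^k) + (x - y) * y^k" by (simp add: algebra_simps)
  also have "\<dots> \<le> 1 * (x^k - y^k) + (x - y) * 1"
    using assms by (intro add_mono mult_mono) (auto simp: power_mono power_le_one)
  also have "\<dots> \<le> real (Suc k) * (x - y)" using Suc by (simp add: algebra_simps)
  finally show ?case .
qed

section \<open>Bergman integrals of the logarithmic kernel\<close>

definition log_kernel :: "complex^'n \<Rightarrow> complex^'n \<Rightarrow> real" where
  "log_kernel a z = ln (cmod (1 - cinner a z))"

definition bergman_mass :: "(complex^'n) set \<Rightarrow> real" where
  "bergman_mass X = (LINT z:X|lborel. bergman_dens z)"

definition log_potential :: "(complex^'n) set \<Rightarrow> complex^'n \<Rightarrow> real" where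
  "log_potential X a = (LINT z:X|lborel. log_kernel a z * bergman_dens z)"

definition reduced_L :: "(complex^'n) set \<Rightarrow> complex^'n \<Rightarrow> real" where
  "reduced_L X a = - bergman_mass X * ln (1 - (norm a)^2) + 2 * log_potential X a"

lemma log_kernel_zero [simp]: "log_kernel 0 z = 0"
  unfolding log_kernel_def by simp

lemma log_kernel_minus: "log_kernel (- a) (- z) = log_kernel a z"
  unfolding log_kernel_def by (simp add: cinner_minus_left cinner_minus_right)

lemma continuous_on_log_kernel:
  assumes "norm a < 1" "R \<le> 1"
  shows "continuous_on (cball 0 R) (log_kernel a)"
proof -
  have "cmod (1 - cinner a z) \<noteq> 0" if "z \<in> cball 0 R" for z
    using norm_cinner_less_1[OF assms(1), of z] that assms(2) by auto
  then show ?thesis unfolding log_kernel_def[abs_def]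
    by (intro continuous_on_ln continuous_on_norm continuous_on_diff continuous_on_const
        continuous_on_cinner ballI)
qed

lemma borel_measurable_log_kernel: "log_kernel a \<in> borel_measurable borel"
  using borel_measurable_cinner[of a] unfolding log_kernel_def[abs_def] by measurable

lemma abs_log_kernel_le:
  assumes "norm a < 1" "norm z \<le> R" "R < 1"
  shows "\<bar>log_kernel a z\<bar> \<le> norm a * R / (1 - R)"
proof -
  have R: "0 \<le> R" using assms(2) norm_ge_zero order_trans by blast
  have v: "norm (cinner a z) \<le> norm a * R" using assms R by (intro norm_cinner_le_mult) auto
  have "norm a * R \<le> R" using assms R by (intro mult_left_le_one_le) auto
  then have "\<bar>log_kernel a z\<bar> \<le> norm (cinner a z) / (1 - norm (cinner a z))"
    unfolding log_kernel_def using v assms by (intro abs_ln_norm_one_minus_le) auto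
  also have "\<dots> \<le> norm a * R / (1 - R)"
    using v \<open>norm a * R \<le> R\<close> assms R by (intro frac_le) auto
  finally show ?thesis .
qed

lemma abs_log_kernel_diff_le:
  assumes "norm a \<le> 1/2" "norm b \<le> 1/2" "norm z \<le> 1"
  shows "\<bar>log_kernel a z - log_kernel b z\<bar> \<le> 2 * norm (a - b)"
proof -
  have "norm (cinner a z) \<le> 1/2" "norm (cinner b z) \<le> 1/2"
    using assms norm_cinner_le_mult[of _ "1/2" z 1] by auto
  then have "\<bar>log_kernel a z - log_kernel b z\<bar> \<le> 2 * norm (cinner a z - cinner b z)"
    unfolding log_kernel_def by (rule ln_norm_one_minus_lipschitz)
  also have "\<dots> \<le> 2 * norm (a - b)"
    using assms norm_cinner_le_mult[of "a - b" "norm (a - b)" z 1] by (simp add: cinner_diff_left)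
  finally show ?thesis .
qed

lemma abs_log_kernel_midpoint_defect_le:
  assumes "norm a \<le> 1/4" "norm b \<le> 1/4" "norm z \<le> 1"
  shows "\<bar>log_kernel a z + log_kernel b z - 2 * log_kernel ((a + b) /\<^sub>R 2) z\<bar> \<le> (norm (a - b))^2"
proof -
  have "norm (cinner a z) \<le> 1/4" "norm (cinner b z) \<le> 1/4"
    using assms norm_cinner_le_mult[of _ "1/4" z 1] by auto
  then have "\<bar>log_kernel a z + log_kernel b z - 2 * log_kernel ((a + b) /\<^sub>R 2) z\<bar>
      \<le> (norm (cinner a z - cinner b z))^2"
    unfolding log_kernel_def cinner_midpoint_left by (rule abs_ln_norm_midpoint_defect_le)
  also have "\<dots> \<le> (norm (a - b))^2"
    using assms norm_cinner_le_mult[of "a - b" "norm (a - b)" z 1]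
    by (intro power_mono) (auto simp: cinner_diff_left)
  finally show ?thesis .
qed

lemma log_kernel_midpoint_defect_ge:
  assumes "norm a \<le> \<eta>" "norm b \<le> \<eta>" "\<eta> \<le> 1/4" "norm z \<le> r" "r \<le> 1"
  shows "- (r^2 * (norm (a - b))^2 / (4 * (1 - 2 * \<eta>)))
           \<le> log_kernel a z + log_kernel b z - 2 * log_kernel ((a + b) /\<^sub>R 2) z"
proof -
  have r: "0 \<le> r" using assms(4) norm_ge_zero order_trans by blast
  have "norm (cinner a z) \<le> \<eta>" "norm (cinner b z) \<le> \<eta>"
    using assms r norm_cinner_le_mult[of _ \<eta> z 1] by (auto intro: order_trans)
  then have "- ((norm (cinner a z - cinner b z))^2 / (4 * (1 - 2 * \<eta>)))
      \<le> log_kernel a z + log_kernel b z - 2 * log_kernel ((a + b) /\<^sub>R 2) z"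
    unfolding log_kernel_def cinner_midpoint_left using assms(3) by (rule ln_norm_midpoint_defect_ge)
  moreover have "(norm (cinner a z - cinner b z))^2 \<le> (norm (a - b) * r)^2"
    using assms r norm_cinner_le_mult[of "a - b" "norm (a - b)" z r]
    by (intro power_mono) (auto simp: cinner_diff_left)
  moreover have "0 < 4 * (1 - 2 * \<eta>)" using assms by simp
  ultimately show ?thesis
    by (smt (verit) divide_right_mono mult.commute power_mult_distrib)
qed

text \<open>Since \<open>|1 - v| |1 + v| = |1 - v\<^sup>2| \<ge> 1 - |v|\<^sup>2\<close>, the even part of the kernel is controlled by the
  concavity of \<open>ln\<close>.\<close>

lemma log_kernel_even_part_ge:
  assumes "norm a < 1" "norm z \<le> r" "r \<le> 1"
  shows "r^2 * ln (1 - (norm a)^2) \<le> log_kernel a z + log_kernel (- a) z"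
proof -
  define v where "v = cinner a z"
  have r: "0 \<le> r" using assms(2) norm_ge_zero order_trans by blast
  have nv: "norm v \<le> norm a * r" unfolding v_def using assms r by (intro norm_cinner_le_mult) auto
  have "norm a * r \<le> norm a" using r assms by (intro mult_left_le) auto
  then have nv1: "norm v < 1" using nv assms by linarith
  have s: "0 \<le> (norm a)^2" "(norm a)^2 < 1" using assms by (auto simp: power_less_one_iff)
  have t: "0 \<le> r^2" "r^2 \<le> 1" using r assms by (auto simp: power_le_one)
  have "(norm v)^2 \<le> (norm a * r)^2" using nv by (intro power_mono) auto
  then have q1: "1 - r^2 * (norm a)^2 \<le> 1 - (norm v)^2" by (simp add: power_mult_distrib algebra_simps)
  have "r^2 * (norm a)^2 \<le> 1 * (norm a)^2" using t s by (intro mult_right_mono) auto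
  then have q0: "0 < 1 - r^2 * (norm a)^2" using s by linarith
  have ne: "1 - v \<noteq> 0" "1 + v \<noteq> 0" using nv1 by (auto simp: add_eq_0_iff)
  have "r^2 * ln (1 - (norm a)^2) \<le> ln (1 - r^2 * (norm a)^2)"
    using s t by (intro ln_one_minus_mult_ge) auto
  also have "\<dots> \<le> ln (cmod (1 - v^2))"
    using q0 q1 norm_triangle_ineq2[of 1 "v^2"] by (intro ln_mono) (auto simp: norm_power)
  also have "cmod (1 - v^2) = cmod (1 - v) * cmod (1 + v)"
    by (simp add: norm_mult[symmetric] power2_eq_square algebra_simps)
  also have "ln \<dots> = log_kernel a z + log_kernel (- a) z"
    using ne unfolding log_kernel_def v_def by (simp add: ln_mult cinner_minus_left)
  finally show ?thesis .
qed

lemma bergman_dens_nonneg: "0 \<le> bergman_dens z"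
  unfolding bergman_dens_def by simp

lemma bergman_mass_nonneg: "0 \<le> bergman_mass X"
  unfolding bergman_mass_def set_lebesgue_integral_def
  by (intro Bochner_Integration.integral_nonneg) (simp add: bergman_dens_nonneg)

lemma set_integrable_bergman:
  fixes g :: "complex^'n \<Rightarrow> real"
  assumes "X \<in> sets lborel" "X \<subseteq> cball 0 R" "R < 1" "continuous_on (cball 0 R) g"
  shows "set_integrable lborel X (\<lambda>z. g z * bergman_dens z)"
  using assms by (intro set_integrable_cball[of X 0 R] continuous_on_mult continuous_on_bergman_dens)

lemma set_integral_bergman_ge:
  fixes g :: "complex^'n \<Rightarrow> real"
  assumes "X \<in> sets lborel" "X \<subseteq> cball 0 R" "R < 1" "continuous_on (cball 0 R) g"
    and "\<And>z. z \<in> X \<Longrightarrow> c \<le> g z"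
  shows "c * bergman_mass X \<le> (LINT z:X|lborel. g z * bergman_dens z)"
proof -
  have "c * bergman_mass X = (LINT z:X|lborel. c * bergman_dens z)"
    unfolding bergman_mass_def by simp
  also have "\<dots> \<le> (LINT z:X|lborel. g z * bergman_dens z)"
    using assms set_integrable_bergman[of X R "\<lambda>_. c"]
    by (intro set_integral_mono set_integrable_bergman[of X R] mult_right_mono bergman_dens_nonneg)
      (auto intro: continuous_on_const)
  finally show ?thesis .
qed

lemma abs_set_integral_bergman_le:
  fixes g :: "complex^'n \<Rightarrow> real"
  assumes "X \<in> sets lborel" "X \<subseteq> cball 0 R" "R < 1" "continuous_on (cball 0 R) g"
    and "\<And>z. z \<in> X \<Longrightarrow> \<bar>g z\<bar> \<le> c"
  shows "\<bar>LINT z:X|lborel. g z * bergman_dens z\<bar> \<le> c * bergman_mass X"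
proof -
  have "- c \<le> g z" "- c \<le> - g z" if "z \<in> X" for z
    using assms(5)[OF that] by auto
  then have "- c * bergman_mass X \<le> (LINT z:X|lborel. g z * bergman_dens z)"
    and "- c * bergman_mass X \<le> (LINT z:X|lborel. - g z * bergman_dens z)"
    using set_integral_bergman_ge[OF assms(1-4)]
      set_integral_bergman_ge[OF assms(1-3) continuous_on_minus[OF assms(4)]] by blast+
  then show ?thesis
    using set_integral_uminus[OF set_integrable_bergman[OF assms(1-4)]] by (simp add: abs_le_iff)
qed

lemma set_integrable_log_kernel:
  assumes "X \<in> sets lborel" "X \<subseteq> cball 0 R" "R < 1" "norm a < 1"
  shows "set_integrable lborel X (\<lambda>z. log_kernel a z * bergman_dens z)"
  using assms by (intro set_integrable_bergman[of X R] continuous_on_log_kernel) auto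

lemma reduced_L_zero [simp]: "reduced_L X 0 = 0"
  unfolding reduced_L_def log_potential_def by simp

lemma log_potential_midpoint_defect:
  assumes X: "X \<in> sets lborel" "X \<subseteq> cball 0 R" "R < 1" and ab: "norm a < 1" "norm b < 1"
  shows "log_potential X a + log_potential X b - 2 * log_potential X ((a + b) /\<^sub>R 2) =
    (LINT z:X|lborel. (log_kernel a z + log_kernel b z - 2 * log_kernel ((a + b) /\<^sub>R 2) z) * bergman_dens z)"
proof -
  have "norm ((a + b) /\<^sub>R 2) < 1" using ab norm_triangle_ineq[of a b] by simp
  note ia = set_integrable_log_kernel[OF X ab(1)] and ib = set_integrable_log_kernel[OF X ab(2)]
    and im = set_integrable_mult_right[OF set_integrable_log_kernel[OF X this], of 2]
  have "(LINT z:X|lborel. (log_kernel a z + log_kernel b z - 2 * log_kernel ((a + b) /\<^sub>R 2) z)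
          * bergman_dens z)
      = (LINT z:X|lborel. (log_kernel a z * bergman_dens z + log_kernel b z * bergman_dens z)
          - 2 * (log_kernel ((a + b) /\<^sub>R 2) z * bergman_dens z))"
    by (simp add: left_diff_distrib distrib_right mult.assoc)
  also have "\<dots> = log_potential X a + log_potential X b - 2 * log_potential X ((a + b) /\<^sub>R 2)"
    unfolding log_potential_def
    by (simp only: set_integral_diff(2)[OF set_integral_add(1)[OF ia ib] im]
        set_integral_add(2)[OF ia ib] set_integral_mult_right)
  finally show ?thesis by simp
qed

lemma abs_log_potential_diff_le:
  assumes X: "X \<in> sets lborel" "X \<subseteq> cball 0 R" "R < 1" and ab: "norm a \<le> 1/2" "norm b \<le> 1/2"
  shows "\<bar>log_potential X a - log_potential X b\<bar> \<le> 2 * norm (a - b) * bergman_mass X"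
proof -
  have "norm a < 1" "norm b < 1" using ab by auto
  then have "log_potential X a - log_potential X b
      = (LINT z:X|lborel. (log_kernel a z - log_kernel b z) * bergman_dens z)"
    unfolding log_potential_def using X
    by (simp add: set_integral_diff(2)[OF set_integrable_log_kernel set_integrable_log_kernel]
        left_diff_distrib)
  also have "\<bar>\<dots>\<bar> \<le> 2 * norm (a - b) * bergman_mass X"
    using X ab \<open>norm a < 1\<close> \<open>norm b < 1\<close>
    by (intro abs_set_integral_bergman_le[of X R] continuous_on_diff continuous_on_log_kernel
        abs_log_kernel_diff_le) auto
  finally show ?thesis .
qed

lemma continuous_on_reduced_L:
  assumes "X \<in> sets lborel" "X \<subseteq> cball 0 R" "R < 1"
  shows "continuous_on (cball 0 (1/2)) (reduced_L X)"
proof -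
  have "(2 * bergman_mass X)-lipschitz_on (cball 0 (1/2)) (log_potential X)"
    using abs_log_potential_diff_le[OF assms] bergman_mass_nonneg
    by (intro lipschitz_onI) (auto simp: dist_real_def dist_norm mult_ac)
  then have "continuous_on (cball 0 (1/2)) (log_potential X)"
    by (rule lipschitz_on_continuous_on)
  moreover have "1 - (norm a)^2 \<noteq> 0" if "a \<in> cball (0::complex^'n) (1/2)" for a
    using that norm_sq_less_1[of a] by simp
  ultimately show ?thesis unfolding reduced_L_def[abs_def]
    by (intro continuous_intros ballI) auto
qed

lemma log_potential_ball_minus: "log_potential (ball 0 r) (- a) = log_potential (ball 0 r) a"
proof -
  have "log_potential (ball 0 r) a = (LINT z:ball 0 r|lborel. log_kernel a (- z) * bergman_dens (- z))"
    unfolding log_potential_def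
    by (rule set_integral_ball_reflect[symmetric]) (intro borel_measurable_times
        borel_measurable_log_kernel borel_measurable_bergman_dens)
  also have "\<dots> = log_potential (ball 0 r) (- a)"
    unfolding log_potential_def using log_kernel_minus[of "- a"] by simp
  finally show ?thesis by simp
qed

lemma log_potential_ball_ge:
  fixes a :: "complex^'n"
  assumes "0 \<le> r" "r < 1" "norm a < 1"
  shows "r^2 * ln (1 - (norm a)^2) * bergman_mass (ball (0::complex^'n) r) \<le> 2 * log_potential (ball 0 r) a"
proof -
  have X: "ball (0::complex^'n) r \<in> sets lborel" "ball (0::complex^'n) r \<subseteq> cball 0 r" by auto
  have "norm (- a) < 1" using assms by simp
  have "r^2 * ln (1 - (norm a)^2) * bergman_mass (ball (0::complex^'n) r)
      \<le> (LINT z:ball 0 r|lborel. (log_kernel a z + log_kernel (- a) z) * bergman_dens z)"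
    using assms \<open>norm (- a) < 1\<close>
    by (intro set_integral_bergman_ge[OF X assms(2)] continuous_on_add continuous_on_log_kernel
        log_kernel_even_part_ge) auto
  also have "\<dots> = log_potential (ball 0 r) a + log_potential (ball 0 r) (- a)"
    unfolding log_potential_def distrib_right
    using set_integrable_log_kernel[OF X assms(2)] assms \<open>norm (- a) < 1\<close>
    by (simp add: set_integral_add(2))
  finally show ?thesis by (simp add: log_potential_ball_minus)
qed

lemma log_potential_ball_midpoint_defect_ge:
  fixes a b :: "complex^'n"
  assumes "0 \<le> r" "r < 1" "norm a \<le> \<eta>" "norm b \<le> \<eta>" "\<eta> \<le> 1/4"
  shows "- (bergman_mass (ball (0::complex^'n) r) * (r^2 * (norm (a - b))^2 / (4 * (1 - 2 * \<eta>))))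
     \<le> log_potential (ball 0 r) a + log_potential (ball 0 r) b - 2 * log_potential (ball 0 r) ((a + b) /\<^sub>R 2)"
proof -
  have X: "ball (0::complex^'n) r \<in> sets lborel" "ball (0::complex^'n) r \<subseteq> cball 0 r" by auto
  have ab: "norm a < 1" "norm b < 1" using assms by auto
  then have "norm ((a + b) /\<^sub>R 2) < 1" using norm_triangle_ineq[of a b] by simp
  then have "- (r^2 * (norm (a - b))^2 / (4 * (1 - 2 * \<eta>))) * bergman_mass (ball (0::complex^'n) r)
      \<le> (LINT z:ball 0 r|lborel. (log_kernel a z + log_kernel b z - 2 * log_kernel ((a + b) /\<^sub>R 2) z)
            * bergman_dens z)"
    using assms ab
    by (intro set_integral_bergman_ge[OF X assms(2)] continuous_on_add continuous_on_diff
        continuous_on_mult continuous_on_const continuous_on_log_kernel log_kernel_midpoint_defect_ge) auto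
  then show ?thesis using log_potential_midpoint_defect[OF X assms(2) ab] by (simp add: mult.commute)
qed

lemma L_fun_eq_reduced_L:
  fixes X :: "(complex^'n) set"
  assumes X: "X \<in> sets lborel" "X \<subseteq> cball 0 R" "R < 1" and a: "norm a < 1"
  shows "L_fun X a = reduced_L X a - (LINT z:X|lborel. ln (1 - (norm z)^2) * bergman_dens z)"
proof -
  have "continuous_on (cball 0 R) (\<lambda>z::complex^'n. ln (1 - (norm z)^2))"
  proof (intro continuous_intros ballI)
    fix z :: "complex^'n" assume "z \<in> cball 0 R"
    then show "1 - (norm z)^2 \<noteq> 0" using X norm_sq_less_1[of z] by simp
  qed
  then have iz: "set_integrable lborel X (\<lambda>z. ln (1 - (norm z)^2) * bergman_dens z)"
    by (rule set_integrable_bergman[OF X])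
  have ia: "set_integrable lborel X (\<lambda>z. ln (1 - (norm a)^2) * bergman_dens z)"
    by (intro set_integrable_bergman[OF X] continuous_on_const)
  have ik: "set_integrable lborel X (\<lambda>z. 2 * (log_kernel a z * bergman_dens z))"
    by (intro set_integrable_mult_right set_integrable_log_kernel[OF X a])
  have pointwise: "ln ((1 - (norm a)^2) * (1 - (norm z)^2) / (cmod (1 - cinner a z))^2) * bergman_dens z
      = ln (1 - (norm a)^2) * bergman_dens z + ln (1 - (norm z)^2) * bergman_dens z
         - 2 * (log_kernel a z * bergman_dens z)" if "z \<in> X" for z
  proof -
    have z: "norm z < 1" using that X by auto
    then have "0 < cmod (1 - cinner a z)" using norm_cinner_less_1[OF a, of z] by auto
    moreover have "0 < 1 - (norm a)^2" "0 < 1 - (norm z)^2" using a z by (auto simp: power_less_one_iff)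
    ultimately have "ln ((1 - (norm a)^2) * (1 - (norm z)^2) / (cmod (1 - cinner a z))^2)
        = ln (1 - (norm a)^2) + ln (1 - (norm z)^2) - 2 * log_kernel a z"
      unfolding log_kernel_def by (simp add: ln_div ln_mult ln_realpow)
    then show ?thesis by (simp only: distrib_right left_diff_distrib mult.assoc)
  qed
  have "L_fun X a = - (LINT z:X|lborel. ln (1 - (norm a)^2) * bergman_dens z
      + ln (1 - (norm z)^2) * bergman_dens z - 2 * (log_kernel a z * bergman_dens z))"
    unfolding L_fun_def using pointwise by (simp add: set_lebesgue_integral_cong[OF X(1)])
  also have "\<dots> = reduced_L X a - (LINT z:X|lborel. ln (1 - (norm z)^2) * bergman_dens z)"
    unfolding reduced_L_def bergman_mass_def log_potential_def
    by (simp add: set_integral_diff(2)[OF set_integral_add(1)[OF ia iz] ik] set_integral_add(2)[OF ia iz])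
  finally show ?thesis .
qed

lemma bergman_mass_ball_ge:
  assumes "0 \<le> r" "r < 1"
  shows "unit_ball_vol (DIM(complex^'n)) * r ^ DIM(complex^'n) \<le> bergman_mass (ball (0::complex^'n) r)"
proof -
  have X: "ball (0::complex^'n) r \<in> sets lborel" "ball (0::complex^'n) r \<subseteq> cball 0 r" by auto
  have "unit_ball_vol (DIM(complex^'n)) * r ^ DIM(complex^'n) = measure lborel (ball (0::complex^'n) r)"
    using assms by (simp add: content_ball)
  also have "\<dots> = (LINT z:ball (0::complex^'n) r|lborel. 1)"
    using emeasure_lborel_ball_finite[of "0::complex^'n" r] by (subst set_integral_const) auto
  also have "\<dots> \<le> bergman_mass (ball (0::complex^'n) r)"
    unfolding bergman_mass_def using set_integrable_bergman[OF X assms(2), of "\<lambda>_. 1"] assms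
    by (intro set_integral_mono set_integrable_cball[OF X] bergman_dens_ge_1 continuous_on_bergman_dens)
      (auto intro: continuous_on_const)
  finally show ?thesis .
qed

section \<open>Sets squeezed between two balls\<close>

locale ball_sandwich =
  fixes E :: "(complex^'n) set" and r r1 r2 R :: real
  assumes E_sets: "E \<in> sets lborel"
    and ball_subset_E: "ball 0 r1 \<subseteq> E" and E_subset_cball: "E \<subseteq> cball 0 r2"
    and radii: "0 \<le> r1" "r1 \<le> r" "r \<le> r2" "r2 \<le> R" "R < 1"
begin

text \<open>\<open>(1 - R\<^sup>2)\<^sup>-\<^sup>n\<^sup>-\<^sup>1\<close> bounds the Bergman density on \<open>B[0, R]\<close>, so \<open>shell_bound\<close> bounds the Bergman
  mass of the shell \<open>B[0, r\<^sub>2] - B(0, r\<^sub>1)\<close>, where \<open>E\<close> and \<open>B(0, r)\<close> may differ.\<close>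

definition shell_bound where
  "shell_bound = (1 - R^2) powr (- (real CARD('n) + 1))
     * (measure lborel (cball (0::complex^'n) r2) - measure lborel (ball (0::complex^'n) r1))"

lemma E_subset_cball_R: "E \<subseteq> cball 0 R"
  using E_subset_cball radii by auto

lemma ball_subset_cball_R: "ball (0::complex^'n) r \<subseteq> cball 0 R"
  using radii by auto

lemma shell_bound_nonneg: "0 \<le> shell_bound"
proof -
  have "unit_ball_vol (DIM(complex^'n)) * r1 ^ DIM(complex^'n)
      \<le> unit_ball_vol (DIM(complex^'n)) * r2 ^ DIM(complex^'n)"
    using radii by (intro mult_left_mono power_mono) auto
  then show ?thesis unfolding shell_bound_def using radii by (simp add: content_ball content_cball)
qed

lemma shell_bound_le:
  "shell_bound \<le> (1 - R^2) powr (- (real CARD('n) + 1)) * unit_ball_vol (DIM(complex^'n))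
                     * (DIM(complex^'n) * (r2 - r1))"
proof -
  have "shell_bound = (1 - R^2) powr (- (real CARD('n) + 1)) * unit_ball_vol (DIM(complex^'n))
      * (r2 ^ DIM(complex^'n) - r1 ^ DIM(complex^'n))"
    unfolding shell_bound_def using radii by (simp add: content_ball content_cball right_diff_distrib)
  also have "\<dots> \<le> (1 - R^2) powr (- (real CARD('n) + 1)) * unit_ball_vol (DIM(complex^'n))
      * (DIM(complex^'n) * (r2 - r1))"
    using radii by (intro mult_left_mono power_diff_le_mult) auto
  finally show ?thesis .
qed

lemma abs_set_integral_diff_ball_le:
  fixes g :: "complex^'n \<Rightarrow> real"
  assumes g: "continuous_on (cball 0 R) g" and H: "\<And>z. z \<in> cball 0 R \<Longrightarrow> \<bar>g z\<bar> \<le> H"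
  shows "\<bar>(LINT z:E|lborel. g z * bergman_dens z) - (LINT z:ball 0 r|lborel. g z * bergman_dens z)\<bar>
           \<le> H * shell_bound"
proof -
  define W where "W = (1 - R^2) powr (- (real CARD('n) + 1))"
  have "0 \<le> H" using H[of 0] radii by simp
  have "\<bar>g z * bergman_dens z\<bar> \<le> H * W" if "z \<in> cball 0 r2" for z
  proof -
    have "z \<in> cball 0 R" using that radii by auto
    then have "\<bar>g z\<bar> * bergman_dens z \<le> H * W"
      unfolding W_def using H radii \<open>0 \<le> H\<close>
      by (intro mult_mono bergman_dens_le bergman_dens_nonneg) auto
    then show ?thesis by (simp add: abs_mult bergman_dens_nonneg)
  qed
  moreover have "continuous_on (cball 0 r2) (\<lambda>z. g z * bergman_dens z)"
    using radii by (intro continuous_on_mult continuous_on_bergman_dens continuous_on_subset[OF g]) auto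
  ultimately have "\<bar>(LINT z:E|lborel. g z * bergman_dens z) - (LINT z:ball 0 r|lborel. g z * bergman_dens z)\<bar>
      \<le> H * W * (measure lborel (cball (0::complex^'n) r2) - measure lborel (ball (0::complex^'n) r1))"
    using E_sets ball_subset_E E_subset_cball radii
    by (intro abs_set_integral_diff_le_shell) auto
  then show ?thesis unfolding shell_bound_def W_def by (simp add: mult.assoc)
qed

lemma abs_bergman_mass_diff_le: "\<bar>bergman_mass E - bergman_mass (ball (0::complex^'n) r)\<bar> \<le> shell_bound"
  using abs_set_integral_diff_ball_le[of "\<lambda>_. 1" 1] unfolding bergman_mass_def
  by (simp add: continuous_on_const)

lemma abs_log_potential_diff_ball_le:
  assumes "norm a < 1"
  shows "\<bar>log_potential E a - log_potential (ball 0 r) a\<bar> \<le> norm a * R / (1 - R) * shell_bound"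
  unfolding log_potential_def using assms radii
  by (intro abs_set_integral_diff_ball_le continuous_on_log_kernel abs_log_kernel_le) auto

lemma abs_log_potential_defect_diff_ball_le:
  assumes ab: "norm a \<le> 1/4" "norm b \<le> 1/4"
  shows "\<bar>(log_potential E a + log_potential E b - 2 * log_potential E ((a + b) /\<^sub>R 2))
        - (log_potential (ball 0 r) a + log_potential (ball 0 r) b
           - 2 * log_potential (ball 0 r) ((a + b) /\<^sub>R 2))\<bar>
      \<le> (norm (a - b))^2 * shell_bound"
proof -
  have ab1: "norm a < 1" "norm b < 1" using ab by auto
  have "norm ((a + b) /\<^sub>R 2) < 1" using ab norm_triangle_ineq[of a b] by simp
  have "\<bar>(LINT z:E|lborel. (log_kernel a z + log_kernel b z - 2 * log_kernel ((a + b) /\<^sub>R 2) z) * bergman_dens z)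
      - (LINT z:ball 0 r|lborel. (log_kernel a z + log_kernel b z - 2 * log_kernel ((a + b) /\<^sub>R 2) z)
          * bergman_dens z)\<bar> \<le> (norm (a - b))^2 * shell_bound"
    using ab ab1 \<open>norm ((a + b) /\<^sub>R 2) < 1\<close> radii
    by (intro abs_set_integral_diff_ball_le continuous_on_add continuous_on_diff continuous_on_mult
        continuous_on_const continuous_on_log_kernel abs_log_kernel_midpoint_defect_le) auto
  then show ?thesis
    using log_potential_midpoint_defect[OF E_sets E_subset_cball_R radii(5) ab1]
      log_potential_midpoint_defect[OF _ ball_subset_cball_R radii(5) ab1] by simp
qed

end

locale ball_sandwich_radii = ball_sandwich E r r1 r2 R
  for E :: "(complex^'n) set" and r r1 r2 R :: real +
  fixes \<rho>m \<rho>p :: real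
  assumes radius_bounds: "0 < \<rho>m" "\<rho>m \<le> r" "r \<le> \<rho>p" "\<rho>p < 1"
begin

definition coercivity_const where
  "coercivity_const = unit_ball_vol (DIM(complex^'n)) * \<rho>m ^ DIM(complex^'n) * (1 - \<rho>p^2)"

definition convexity_radius where
  "convexity_radius = (1 - \<rho>p^2) / 4"

definition barycenter_const where
  "barycenter_const = 4 * R / ((1 - R) * coercivity_const)"

lemma one_minus_\<rho>p_sq_pos: "0 < 1 - \<rho>p^2"
  using radius_bounds by (auto simp: power_less_one_iff)

lemma coercivity_const_pos: "0 < coercivity_const"
  unfolding coercivity_const_def using radius_bounds one_minus_\<rho>p_sq_pos by simp

lemma convexity_radius_bounds: "0 < convexity_radius" "convexity_radius \<le> 1/4"
  unfolding convexity_radius_def using one_minus_\<rho>p_sq_pos by simp_all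

lemma barycenter_const_nonneg: "0 \<le> barycenter_const"
  unfolding barycenter_const_def using coercivity_const_pos radii radius_bounds by simp

lemma coercivity_const_le: "coercivity_const \<le> bergman_mass (ball (0::complex^'n) r) * (1 - \<rho>p^2)"
proof -
  have "unit_ball_vol (DIM(complex^'n)) * \<rho>m ^ DIM(complex^'n)
      \<le> unit_ball_vol (DIM(complex^'n)) * r ^ DIM(complex^'n)"
    using radius_bounds by (intro mult_left_mono power_mono) auto
  also have "\<dots> \<le> bergman_mass (ball (0::complex^'n) r)"
    using radii radius_bounds by (intro bergman_mass_ball_ge) auto
  finally show ?thesis
    unfolding coercivity_const_def using one_minus_\<rho>p_sq_pos by (intro mult_right_mono) auto
qed

lemma reduced_L_ge:
  assumes a: "norm a < 1" and small: "shell_bound \<le> coercivity_const / 2"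
  shows "coercivity_const / 2 * (norm a)^2 - 2 * R / (1 - R) * shell_bound * norm a \<le> reduced_L E a"
proof -
  define h where "h = - ln (1 - (norm a)^2)"
  define mB where "mB = bergman_mass (ball (0::complex^'n) r)"
  have "ln (1 - (norm a)^2) \<le> (1 - (norm a)^2) - 1"
    using norm_sq_less_1[OF a] by (intro ln_le_minus_one) simp
  then have h: "(norm a)^2 \<le> h" unfolding h_def by simp
  then have "0 \<le> h" using zero_le_power2[of "norm a"] by linarith
  then have mass_E: "(mB - shell_bound) * h \<le> bergman_mass E * h"
    using abs_bergman_mass_diff_le unfolding mB_def by (intro mult_right_mono) auto
  have pot_E: "2 * log_potential (ball 0 r) a - 2 * (norm a * R / (1 - R) * shell_bound)
      \<le> 2 * log_potential E a"
    using abs_log_potential_diff_ball_le[OF a] by (simp add: abs_le_iff)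
  have pot_B: "- (r^2 * h * mB) \<le> 2 * log_potential (ball 0 r) a"
    using log_potential_ball_ge[of r a] a radii unfolding h_def mB_def by simp
  have "coercivity_const \<le> mB * (1 - r^2)"
  proof -
    have "r^2 \<le> \<rho>p^2" using radius_bounds radii by (intro power_mono) auto
    then have "mB * (1 - \<rho>p^2) \<le> mB * (1 - r^2)"
      unfolding mB_def using bergman_mass_nonneg by (intro mult_left_mono) auto
    then show ?thesis using coercivity_const_le unfolding mB_def by linarith
  qed
  then have "coercivity_const / 2 \<le> mB - shell_bound - r^2 * mB"
    using small by (simp add: algebra_simps)
  then have "coercivity_const / 2 * (norm a)^2 \<le> (mB - shell_bound - r^2 * mB) * h"
    using h coercivity_const_pos by (intro mult_mono) auto
  then show ?thesis using mass_E pot_E pot_B unfolding reduced_L_def h_def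
    by (simp add: algebra_simps)
qed

lemma norm_le_if_reduced_L_nonpos:
  assumes a: "norm a < 1" and small: "shell_bound \<le> coercivity_const / 2" and F: "reduced_L E a \<le> 0"
  shows "norm a \<le> barycenter_const * shell_bound"
proof (cases "a = 0")
  case True then show ?thesis using barycenter_const_nonneg shell_bound_nonneg by simp
next
  case False
  define K where "K = 2 * R / (1 - R) * shell_bound"
  have "coercivity_const / 2 * norm a * norm a \<le> K * norm a"
    using reduced_L_ge[OF a small] F unfolding K_def by (simp add: power2_eq_square)
  then have "coercivity_const / 2 * norm a \<le> K" using False by simp
  then have "norm a \<le> K / (coercivity_const / 2)"
    using coercivity_const_pos by (simp add: le_divide_eq mult.commute)
  also have "\<dots> = barycenter_const * shell_bound"
    unfolding K_def barycenter_const_def using coercivity_const_pos radii by (simp add: field_simps)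
  finally show ?thesis .
qed


lemma log_potential_midpoint_defect_ge:
  assumes ab: "norm a \<le> convexity_radius" "norm b \<le> convexity_radius"
  shows "- (bergman_mass (ball (0::complex^'n) r) * (r^2 / (1 - 2 * convexity_radius)) * (norm (a - b))^2 / 4)
           - (norm (a - b))^2 * shell_bound
         \<le> log_potential E a + log_potential E b - 2 * log_potential E ((a + b) /\<^sub>R 2)"
proof -
  have "- (bergman_mass (ball (0::complex^'n) r) * (r^2 * (norm (a - b))^2 / (4 * (1 - 2 * convexity_radius))))
      \<le> log_potential (ball 0 r) a + log_potential (ball 0 r) b - 2 * log_potential (ball 0 r) ((a + b) /\<^sub>R 2)"
    using ab convexity_radius_bounds radii by (intro log_potential_ball_midpoint_defect_ge) auto
  moreover have "- ((norm (a - b))^2 * shell_bound)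
      \<le> (log_potential E a + log_potential E b - 2 * log_potential E ((a + b) /\<^sub>R 2))
        - (log_potential (ball 0 r) a + log_potential (ball 0 r) b - 2 * log_potential (ball 0 r) ((a + b) /\<^sub>R 2))"
    using abs_log_potential_defect_diff_ball_le[of a b] ab convexity_radius_bounds by (simp add: abs_le_iff)
  ultimately show ?thesis by simp
qed

lemma kernel_defect_ratio_le: "r^2 / (1 - 2 * convexity_radius) \<le> (1 + \<rho>p^2) / 2"
proof -
  have "4 * r^2 \<le> 4 * \<rho>p^2" using radius_bounds radii by (simp add: power_mono)
  also have "\<dots> \<le> (1 + \<rho>p^2)^2"
    using zero_le_power2[of "1 - \<rho>p^2"] by (simp add: power2_eq_square algebra_simps)
  finally have le: "r^2 / ((1 + \<rho>p^2) / 2) \<le> (1 + \<rho>p^2) / 2"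
    by (simp add: divide_le_eq power2_eq_square add_pos_nonneg)
  have "1 - 2 * convexity_radius = (1 + \<rho>p^2) / 2"
    unfolding convexity_radius_def by (simp add: field_simps)
  then show ?thesis using le by (simp only:)
qed

text \<open>Midpoint convexity comes from \<open>-ln (1 - |a|\<^sup>2)\<close>, whose second difference is at least
  \<open>|a - b|\<^sup>2/2\<close>; on \<open>B(0, r)\<close> the kernel term costs at most the fraction \<open>r\<^sup>2/(1 - 2 convexity_radius) < 1\<close>
  of this, and passing from \<open>B(0, r)\<close> to \<open>E\<close> costs \<open>O(shell_bound)\<close>.\<close>

lemma reduced_L_midpoint_less:
  assumes small: "shell_bound \<le> coercivity_const / 20"
    and ab: "norm a \<le> convexity_radius" "norm b \<le> convexity_radius" "a \<noteq> b"
  shows "2 * reduced_L E ((a + b) /\<^sub>R 2) < reduced_L E a + reduced_L E b"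
proof -
  define m where "m = (a + b) /\<^sub>R 2"
  define mB where "mB = bergman_mass (ball (0::complex^'n) r)"
  define d2 where "d2 = (norm (a - b))^2"
  define q where "q = r^2 / (1 - 2 * convexity_radius)"
  define h_defect where "h_defect = - ln (1 - (norm a)^2) - ln (1 - (norm b)^2) + 2 * ln (1 - (norm m)^2)"
  define E_defect where "E_defect = log_potential E a + log_potential E b - 2 * log_potential E m"
  define E_lower where "E_lower = - (mB * q * d2 / 4) - d2 * shell_bound"
  have d2: "0 < d2" unfolding d2_def using ab by simp
  have ab1: "norm a < 1" "norm b < 1" using ab convexity_radius_bounds by auto
  have total: "reduced_L E a + reduced_L E b - 2 * reduced_L E m = bergman_mass E * h_defect + 2 * E_defect"
    unfolding reduced_L_def h_defect_def E_defect_def by (simp add: algebra_simps)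
  have "d2 / 2 \<le> h_defect"
    unfolding h_defect_def d2_def m_def using ln_one_minus_norm_sq_midpoint_defect[OF ab1] by simp
  then have mass_term: "(mB - shell_bound) * (d2 / 2) \<le> bergman_mass E * h_defect"
    using abs_bergman_mass_diff_le bergman_mass_nonneg d2 unfolding mB_def by (intro mult_mono) auto
  have defect_term: "E_lower \<le> E_defect"
    using log_potential_midpoint_defect_ge[OF ab(1,2)]
    unfolding E_lower_def E_defect_def mB_def q_def d2_def m_def by simp
  have "(1 - \<rho>p^2) / 2 \<le> 1 - q" using kernel_defect_ratio_le unfolding q_def by (simp add: field_simps)
  then have "mB * ((1 - \<rho>p^2) / 2) \<le> mB * (1 - q)"
    unfolding mB_def using bergman_mass_nonneg by (rule mult_left_mono)
  then have "coercivity_const / 4 \<le> mB * (1 - q) / 2"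
    using coercivity_const_le unfolding mB_def by simp
  then have "d2 * (coercivity_const / 8) \<le> d2 * (mB * (1 - q) / 2 - 5 * shell_bound / 2)"
    using small d2 by (intro mult_left_mono) auto
  moreover have "0 < d2 * (coercivity_const / 8)" using d2 coercivity_const_pos by simp
  moreover have "(mB - shell_bound) * (d2 / 2) + 2 * E_lower = d2 * (mB * (1 - q) / 2 - 5 * shell_bound / 2)"
    unfolding E_lower_def by (simp add: algebra_simps)
  ultimately have "0 < (mB - shell_bound) * (d2 / 2) + 2 * E_lower" by linarith
  then show ?thesis using total mass_term defect_term unfolding m_def by linarith
qed

lemma norm_le_convexity_radius_if_reduced_L_nonpos:
  assumes small: "shell_bound \<le> coercivity_const / 20" "barycenter_const * shell_bound \<le> convexity_radius"
    and "norm a < 1" "reduced_L E a \<le> 0"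
  shows "norm a \<le> convexity_radius"
proof -
  have "norm a \<le> barycenter_const * shell_bound"
    using assms coercivity_const_pos by (intro norm_le_if_reduced_L_nonpos) auto
  then show ?thesis using small(2) by linarith
qed

lemma reduced_L_has_minimizer:
  assumes small: "shell_bound \<le> coercivity_const / 20" "barycenter_const * shell_bound \<le> convexity_radius"
  obtains a0 where "norm a0 \<le> convexity_radius" "\<And>b. norm b < 1 \<Longrightarrow> reduced_L E a0 \<le> reduced_L E b"
proof -
  have "continuous_on (cball 0 convexity_radius) (reduced_L E)"
    by (rule continuous_on_subset[OF continuous_on_reduced_L[OF E_sets E_subset_cball_R radii(5)]])
      (use convexity_radius_bounds in auto)
  moreover have "cball (0::complex^'n) convexity_radius \<noteq> {}" using convexity_radius_bounds by simp
  ultimately obtain a0 where a0: "a0 \<in> cball 0 convexity_radius"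
    and local_min: "\<forall>y\<in>cball 0 convexity_radius. reduced_L E a0 \<le> reduced_L E y"
    using continuous_attains_inf[OF compact_cball] by blast
  have "reduced_L E a0 \<le> 0"
    using local_min convexity_radius_bounds by (metis centre_in_cball less_imp_le reduced_L_zero)
  have "reduced_L E a0 \<le> reduced_L E b" if "norm b < 1" for b
  proof (rule ccontr)
    assume less: "\<not> reduced_L E a0 \<le> reduced_L E b"
    then have "b \<in> cball 0 convexity_radius"
      using norm_le_convexity_radius_if_reduced_L_nonpos[OF small that] \<open>reduced_L E a0 \<le> 0\<close> by simp
    then show False using local_min less by blast
  qed
  then show ?thesis using that a0 by simp
qed

lemma reduced_L_unique_minimizer:
  assumes small: "shell_bound \<le> coercivity_const / 20" "barycenter_const * shell_bound \<le> convexity_radius"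
  shows "\<exists>!a. a \<in> ball 0 1 \<and> (\<forall>b\<in>ball 0 1. reduced_L E a \<le> reduced_L E b)"
proof -
  obtain a0 where a0: "norm a0 \<le> convexity_radius" and min: "\<And>b. norm b < 1 \<Longrightarrow> reduced_L E a0 \<le> reduced_L E b"
    using reduced_L_has_minimizer[OF small] by blast
  show ?thesis
  proof (rule ex1I[of _ a0])
    show "a0 \<in> ball 0 1 \<and> (\<forall>b\<in>ball 0 1. reduced_L E a0 \<le> reduced_L E b)"
      using a0 min convexity_radius_bounds by simp
  next
    fix a assume "a \<in> ball 0 1 \<and> (\<forall>b\<in>ball 0 1. reduced_L E a \<le> reduced_L E b)"
    then have a: "norm a < 1" and a_min: "\<And>b. norm b < 1 \<Longrightarrow> reduced_L E a \<le> reduced_L E b" by auto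
    have "norm a \<le> convexity_radius"
      using norm_le_convexity_radius_if_reduced_L_nonpos[OF small a] a_min[of 0] by simp
    show "a = a0"
    proof (rule ccontr)
      assume "a \<noteq> a0"
      have "norm ((a + a0) /\<^sub>R 2) \<le> convexity_radius"
        using \<open>norm a \<le> convexity_radius\<close> a0 norm_triangle_ineq[of a a0] by simp
      then have "norm ((a + a0) /\<^sub>R 2) < 1" using convexity_radius_bounds by simp
      then have "reduced_L E a \<le> reduced_L E ((a + a0) /\<^sub>R 2)" "reduced_L E a0 \<le> reduced_L E ((a + a0) /\<^sub>R 2)"
        using a_min min by auto
      moreover have "2 * reduced_L E ((a + a0) /\<^sub>R 2) < reduced_L E a + reduced_L E a0"
        by (rule reduced_L_midpoint_less[OF small(1) \<open>norm a \<le> convexity_radius\<close> a0 \<open>a \<noteq> a0\<close>])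
      ultimately show False by linarith
    qed
  qed
qed

lemma norm_Bar_le:
  assumes small: "shell_bound \<le> coercivity_const / 20" "barycenter_const * shell_bound \<le> convexity_radius"
  shows "norm (Bar E) \<le> barycenter_const * shell_bound"
proof -
  have "(a \<in> ball 0 1 \<and> (\<forall>b\<in>ball 0 1. L_fun E a \<le> L_fun E b))
      \<longleftrightarrow> (a \<in> ball 0 1 \<and> (\<forall>b\<in>ball 0 1. reduced_L E a \<le> reduced_L E b))" for a
    using L_fun_eq_reduced_L[OF E_sets E_subset_cball_R radii(5)] by auto
  then have "Bar E = (THE a. a \<in> ball 0 1 \<and> (\<forall>b\<in>ball 0 1. reduced_L E a \<le> reduced_L E b))"
    unfolding Bar_def by simp
  then have "Bar E \<in> ball 0 1" and min: "\<forall>b\<in>ball 0 1. reduced_L E (Bar E) \<le> reduced_L E b"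
    using theI'[OF reduced_L_unique_minimizer[OF small]] by simp_all
  then have "norm (Bar E) < 1" "reduced_L E (Bar E) \<le> 0"
    using bspec[OF min, of 0] by simp_all
  then show ?thesis
    using norm_le_if_reduced_L_nonpos small coercivity_const_pos by simp
qed

end

lemma norm_Bar_le_shell_width:
  fixes \<rho>m \<rho>p R :: real
  assumes \<rho>: "0 < \<rho>m" "\<rho>m \<le> \<rho>p" "\<rho>p < R" "R < 1"
  obtains \<delta>0 C where "0 < \<delta>0" "0 < C"
    "\<And>(E :: (complex^'n) set) r \<delta>. E \<in> sets lborel \<Longrightarrow> \<rho>m \<le> r \<Longrightarrow> r \<le> \<rho>p \<Longrightarrow> 0 \<le> \<delta> \<Longrightarrow>
       \<delta> \<le> \<delta>0 \<Longrightarrow> ball 0 (r - \<delta>) \<subseteq> E \<Longrightarrow> E \<subseteq> cball 0 (r + \<delta>) \<Longrightarrow> norm (Bar E) \<le> C * \<delta>"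
proof -
  define \<kappa> where "\<kappa> = (1 - R^2) powr (- (real CARD('n) + 1)) * unit_ball_vol (DIM(complex^'n))
                     * DIM(complex^'n) * 2"
  define m0 where "m0 = unit_ball_vol (DIM(complex^'n)) * \<rho>m ^ DIM(complex^'n) * (1 - \<rho>p^2)"
  define \<eta> where "\<eta> = (1 - \<rho>p^2) / 4"
  define C1 where "C1 = 4 * R / ((1 - R) * m0)"
  define \<delta>0 where "\<delta>0 = min (min (m0 / 20 / \<kappa>) (\<eta> / (C1 * \<kappa>))) (min \<rho>m (R - \<rho>p))"
  have "0 < 1 - \<rho>p^2" "0 < 1 - R^2" using \<rho> by (auto simp: power_less_one_iff)
  then have "0 < \<kappa>" "0 < m0" "0 < \<eta>" "0 < C1"
    unfolding \<kappa>_def m0_def \<eta>_def C1_def using \<rho> by auto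
  then have pos: "0 < \<kappa>" "0 < m0" "0 < \<eta>" "0 < C1" "0 < C1 * \<kappa>" by simp_all
  have bound: "norm (Bar E) \<le> C1 * \<kappa> * \<delta>"
    if "E \<in> sets lborel" "\<rho>m \<le> r" "r \<le> \<rho>p" "0 \<le> \<delta>" "\<delta> \<le> \<delta>0"
      "ball 0 (r - \<delta>) \<subseteq> E" "E \<subseteq> cball 0 (r + \<delta>)" for E :: "(complex^'n) set" and r \<delta>
  proof -
    have "\<delta> \<le> m0 / 20 / \<kappa>" "\<delta> \<le> \<eta> / (C1 * \<kappa>)" "\<delta> \<le> \<rho>m" "\<delta> \<le> R - \<rho>p"
      using that(5) unfolding \<delta>0_def by simp_all
    then have \<delta>: "\<kappa> * \<delta> \<le> m0 / 20" "C1 * (\<kappa> * \<delta>) \<le> \<eta>" "\<delta> \<le> \<rho>m" "\<delta> \<le> R - \<rho>p"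
      using pos by (simp_all add: pos_le_divide_eq mult_ac)
    interpret S: ball_sandwich_radii E r "r - \<delta>" "r + \<delta>" R \<rho>m \<rho>p
      using that \<delta> \<rho> by unfold_locales simp_all
    have const_eqs: "S.coercivity_const = m0" "S.convexity_radius = \<eta>" "S.barycenter_const = C1"
      unfolding S.coercivity_const_def S.convexity_radius_def S.barycenter_const_def m0_def \<eta>_def C1_def
      by simp_all
    have shell: "S.shell_bound \<le> \<kappa> * \<delta>"
      using S.shell_bound_le unfolding \<kappa>_def by (simp add: mult_ac)
    then have "S.shell_bound \<le> S.coercivity_const / 20" "S.barycenter_const * S.shell_bound \<le> S.convexity_radius"
      using \<delta> const_eqs pos order_trans[OF mult_left_mono[OF shell]] by (simp_all add: less_imp_le)
    then have "norm (Bar E) \<le> C1 * S.shell_bound" using S.norm_Bar_le const_eqs by simp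
    also have "\<dots> \<le> C1 * \<kappa> * \<delta>" using shell pos by (simp add: mult_left_mono mult.assoc)
    finally show ?thesis .
  qed
  moreover have "0 < \<delta>0" unfolding \<delta>0_def using pos \<rho> by auto
  ultimately show ?thesis using pos by (intro that)
qed

section \<open>Sets whose frontier is a radial graph\<close>

lemma norm_in_radial_frontier:
  fixes A :: "'a::real_normed_vector set"
  assumes fr: "frontier A = {\<rho> \<omega> *\<^sub>R \<omega> | \<omega>. \<omega> \<in> sphere 0 1}"
    and nonneg: "\<And>\<omega>. \<omega> \<in> sphere 0 1 \<Longrightarrow> 0 \<le> \<rho> \<omega>" and p: "p \<in> frontier A"
  obtains \<omega> where "\<omega> \<in> sphere 0 1" "norm p = \<rho> \<omega>"
proof -
  obtain \<omega> where "\<omega> \<in> sphere 0 1" "p = \<rho> \<omega> *\<^sub>R \<omega>" using p fr by auto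
  then show ?thesis using nonneg that by auto
qed

lemma radial_frontier_unique:
  fixes A :: "'a::real_normed_vector set"
  assumes fr: "frontier A = {\<rho> \<omega> *\<^sub>R \<omega> | \<omega>. \<omega> \<in> sphere 0 1}"
    and pos: "\<And>\<omega>. \<omega> \<in> sphere 0 1 \<Longrightarrow> 0 < \<rho> \<omega>"
    and p: "c *\<^sub>R z \<in> frontier A" and c: "0 < c" and z: "z \<noteq> 0"
  shows "c * norm z = \<rho> (z /\<^sub>R norm z)"
proof -
  obtain \<omega> where \<omega>: "\<omega> \<in> sphere 0 1" and pe: "c *\<^sub>R z = \<rho> \<omega> *\<^sub>R \<omega>" using p fr by auto
  have np: "c * norm z = \<rho> \<omega>" using arg_cong[OF pe, of norm] c pos[OF \<omega>] \<omega> by simp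
  have "z /\<^sub>R norm z = (c *\<^sub>R z) /\<^sub>R (c * norm z)" using c by simp
  also have "\<dots> = \<omega>" using pe np pos[OF \<omega>] by simp
  finally show ?thesis using np by simp
qed

lemma frontier_on_outer_ray:
  fixes A :: "'a::real_normed_vector set"
  assumes A: "open A" "A \<subseteq> ball 0 1" and z: "z \<in> A" "z \<noteq> 0"
  obtains s where "1 < s" "s *\<^sub>R z \<in> frontier A"
proof -
  have z0: "z \<noteq> 0" and z1: "norm z < 1" using A z by auto
  have "z /\<^sub>R norm z \<notin> A" using A z0 by auto
  then have "closed_segment z (z /\<^sub>R norm z) \<inter> frontier A \<noteq> {}"
    using z by (intro connected_Int_frontier) auto
  then obtain u where u: "0 \<le> u" "u \<le> 1" "(1 - u) *\<^sub>R z + u *\<^sub>R (z /\<^sub>R norm z) \<in> frontier A"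
    unfolding closed_segment_def by auto
  define s where "s = (1 - u) + u / norm z"
  have "(1 - u) *\<^sub>R z + u *\<^sub>R (z /\<^sub>R norm z) = s *\<^sub>R z"
    unfolding s_def by (simp add: scaleR_add_left divide_inverse_commute)
  with u(3) have s: "s *\<^sub>R z \<in> frontier A" by simp
  have "u \<le> u / norm z" using u z0 z1 by (simp add: le_divide_eq mult_left_le)
  then have "1 \<le> s" unfolding s_def by simp
  moreover have "s \<noteq> 1" using s A z by (auto simp: frontier_def interior_open)
  ultimately have "1 < s" by simp
  then show ?thesis using s by (rule that)
qed

lemma subset_cball_of_radial_frontier:
  fixes A :: "'a::real_normed_vector set"
  assumes A: "open A" "A \<subseteq> ball 0 1"
    and fr: "frontier A = {\<rho> \<omega> *\<^sub>R \<omega> | \<omega>. \<omega> \<in> sphere 0 1}"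
    and bounds: "\<And>\<omega>. \<omega> \<in> sphere 0 1 \<Longrightarrow> 0 \<le> \<rho> \<omega> \<and> \<rho> \<omega> \<le> c2" and "0 \<le> c2"
  shows "A \<subseteq> cball 0 c2"
proof
  fix z assume z: "z \<in> A"
  show "z \<in> cball 0 c2"
  proof (cases "z = 0")
    case False
    then obtain s where "1 < s" "s *\<^sub>R z \<in> frontier A" using frontier_on_outer_ray[OF A z] by blast
    then obtain \<omega> where "\<omega> \<in> sphere 0 1" "norm (s *\<^sub>R z) = \<rho> \<omega>"
      using bounds by (metis norm_in_radial_frontier[OF fr])
    then have "norm (s *\<^sub>R z) \<le> c2" using bounds by simp
    then have "s * norm z \<le> c2" using \<open>1 < s\<close> by simp
    moreover have "norm z \<le> s * norm z" using \<open>1 < s\<close> by (simp add: mult_le_cancel_right1)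
    ultimately show ?thesis by simp
  qed (use \<open>0 \<le> c2\<close> in simp)
qed

lemma ball_subset_of_radial_frontier:
  fixes A :: "'a::euclidean_space set"
  assumes A: "open A" "A \<subseteq> ball 0 1"
    and fr: "frontier A = {\<rho> \<omega> *\<^sub>R \<omega> | \<omega>. \<omega> \<in> sphere 0 1}"
    and lower: "\<And>\<omega>. \<omega> \<in> sphere 0 1 \<Longrightarrow> c1 \<le> \<rho> \<omega>" and c1: "0 < c1"
  shows "ball 0 c1 \<subseteq> A"
proof (rule ccontr)
  assume not_sub: "\<not> ball 0 c1 \<subseteq> A"
  have pos: "\<And>\<omega>. \<omega> \<in> sphere 0 1 \<Longrightarrow> 0 < \<rho> \<omega>" using lower c1 by force
  have norm_fr: "c1 \<le> norm p" if p: "p \<in> frontier A" for p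
  proof -
    obtain \<omega> where "\<omega> \<in> sphere 0 1" "norm p = \<rho> \<omega>"
      using norm_in_radial_frontier[OF fr _ p] pos less_imp_le by metis
    then show ?thesis using lower by simp
  qed
  have "ball 0 c1 \<inter> frontier A = {}" using norm_fr by force
  then have "ball 0 c1 \<inter> A = {}"
    using connected_Int_frontier[of "ball 0 c1" A] not_sub by auto
  moreover have "0 \<in> ball (0::'a) c1" using c1 by simp
  ultimately have "0 \<notin> A" by blast
  obtain \<omega>0 :: 'a where "norm \<omega>0 = 1" using vector_choose_size[of 1] by auto
  then have "\<rho> \<omega>0 *\<^sub>R \<omega>0 \<in> closure A" using fr by (auto simp: frontier_def)
  then have "A \<noteq> {}" by auto
  then obtain z where z: "z \<in> A" by blast
  have z0: "z \<noteq> 0" using z \<open>0 \<notin> A\<close> by auto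
  have "closed_segment 0 z \<inter> frontier A \<noteq> {}"
    using z \<open>0 \<notin> A\<close> by (intro connected_Int_frontier) auto
  then obtain t where t: "0 \<le> t" "t \<le> 1" "t *\<^sub>R z \<in> frontier A"
    unfolding closed_segment_def by auto
  have "0 < t" using norm_fr[OF t(3)] c1 t by (cases "t = 0") auto
  obtain s where s: "1 < s" "s *\<^sub>R z \<in> frontier A" using frontier_on_outer_ray[OF A z z0] by blast
  have "s * norm z = t * norm z"
    using radial_frontier_unique[OF fr pos s(2) _ z0] radial_frontier_unique[OF fr pos t(3) \<open>0 < t\<close> z0]
      s(1) by simp
  then show False using z0 s(1) t(2) by simp
qed

section \<open>Holomorphic functions of several variables\<close>

lemma holo_on_imp_continuous_on:
  fixes \<phi> :: "complex^'n \<Rightarrow> complex"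
  assumes "holo_on S \<phi>"
  shows "continuous_on S \<phi>"
  using assms unfolding holo_on_def
  by (metis continuous_at_imp_continuous_on has_derivative_continuous)

lemma norm_axis: "norm (axis i x :: 'a::real_normed_vector^'n) = norm x"
proof -
  have "(\<Sum>j\<in>UNIV. (norm ((axis i x :: 'a^'n) $ j))^2) = (\<Sum>j\<in>UNIV. if j = i then (norm x)^2 else 0)"
    by (rule sum.cong) (auto simp: axis_def)
  then show ?thesis by (simp add: norm_vec_def L2_set_def)
qed

lemma has_field_derivative_axis_slice:
  fixes \<phi> :: "complex^'n \<Rightarrow> complex"
  assumes D: "(\<phi> has_derivative D) (at (z + axis i \<zeta>))" and hom: "\<forall>c v. D (c *s v) = c * D v"
  shows "((\<lambda>\<zeta>. \<phi> (z + axis i \<zeta>)) has_field_derivative D (axis i 1)) (at \<zeta>)"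
proof -
  have "linear (\<lambda>\<zeta>::complex. axis i \<zeta> :: complex^'n)"
    by (rule linearI) (auto simp: vec_eq_iff axis_def)
  then have "bounded_linear (\<lambda>\<zeta>::complex. axis i \<zeta> :: complex^'n)"
    by (simp add: linear_conv_bounded_linear)
  then have "((\<lambda>\<zeta>. z + axis i \<zeta> :: complex^'n) has_derivative axis i) (at \<zeta>)"
    using has_derivative_add[OF has_derivative_const[of z] bounded_linear_imp_has_derivative] by simp
  from has_derivative_compose[OF this D]
  have "((\<lambda>\<zeta>. \<phi> (z + axis i \<zeta>)) has_derivative (\<lambda>h. D (axis i h))) (at \<zeta>)" .
  moreover have "(\<lambda>h. D (axis i h)) = (*) (D (axis i 1))"
  proof
    fix h
    have "axis i h = h *s (axis i 1 :: complex^'n)" by (simp add: vec_eq_iff axis_def)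
    then show "D (axis i h) = D (axis i 1) * h" using hom by (simp add: mult.commute)
  qed
  ultimately show ?thesis unfolding has_field_derivative_def by simp
qed

lemma norm_partial_derivative_le:
  fixes \<phi> :: "complex^'n \<Rightarrow> complex"
  assumes holo: "holo_on S \<phi>" and sub: "cball z s \<subseteq> S" and s: "0 < s"
    and M: "\<And>w. w \<in> cball z s \<Longrightarrow> norm (\<phi> w) \<le> M"
    and D: "(\<phi> has_derivative D) (at z)" and hom: "\<forall>c v. D (c *s v) = c * D v"
  shows "norm (D (axis i 1)) \<le> M / s"
proof -
  define \<psi> where "\<psi> = (\<lambda>\<zeta>. \<phi> (z + axis i \<zeta>))"
  have slice: "z + axis i \<zeta> \<in> cball z s" if "norm \<zeta> \<le> s" for \<zeta>
    using that by (simp add: dist_norm norm_axis)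
  have diff: "\<psi> field_differentiable at \<zeta>" if \<zeta>: "norm \<zeta> \<le> s" for \<zeta>
  proof -
    obtain D' where "(\<phi> has_derivative D') (at (z + axis i \<zeta>))" "\<forall>c v. D' (c *s v) = c * D' v"
      using holo sub slice[OF \<zeta>] unfolding holo_on_def by blast
    then show ?thesis
      unfolding \<psi>_def field_differentiable_def by (blast intro: has_field_derivative_axis_slice)
  qed
  have Cauchy: "norm ((deriv ^^ 1) \<psi> 0) \<le> fact 1 * M / s ^ 1"
  proof (rule Cauchy_inequality)
    show "\<psi> holomorphic_on ball 0 s"
      unfolding holomorphic_on_def using diff by (auto intro: field_differentiable_at_within)
    show "continuous_on (cball 0 s) \<psi>"
      using diff by (auto intro!: continuous_at_imp_continuous_on field_differentiable_imp_continuous_at)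
    show "norm (\<psi> x) \<le> M" if "norm (0 - x) = s" for x
      unfolding \<psi>_def using that by (intro M slice) simp
  qed (rule s)
  have "z + axis i 0 = z" by (simp add: vec_eq_iff axis_def)
  then have "(\<phi> has_derivative D) (at (z + axis i 0))" using D by (simp only:)
  then have "deriv \<psi> 0 = D (axis i 1)"
    unfolding \<psi>_def by (rule DERIV_imp_deriv[OF has_field_derivative_axis_slice[OF _ hom]])
  then show ?thesis using Cauchy by simp
qed

lemma onorm_le_of_partial_derivatives:
  fixes D :: "complex^'n \<Rightarrow> complex"
  assumes lin: "linear D" and hom: "\<forall>c v. D (c *s v) = c * D v"
    and B: "\<And>i. norm (D (axis i 1)) \<le> B"
  shows "onorm D \<le> real CARD('n) * B"
proof (rule onorm_le)
  fix v :: "complex^'n"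
  have "D v = D (\<Sum>i\<in>UNIV. (v$i) *s axis i 1)" by (simp add: basis_expansion)
  also have "\<dots> = (\<Sum>i\<in>UNIV. v$i * D (axis i 1))" using hom by (simp add: linear_sum[OF lin])
  finally have "norm (D v) = norm (\<Sum>i\<in>UNIV. v$i * D (axis i 1))" by simp
  also have "\<dots> \<le> (\<Sum>i\<in>UNIV. norm (v$i) * norm (D (axis i 1)))"
    by (rule order_trans[OF norm_sum]) (simp add: norm_mult)
  also have "\<dots> \<le> (\<Sum>i\<in>(UNIV::'n set). norm v * B)"
    by (intro sum_mono mult_mono Finite_Cartesian_Product.norm_nth_le B) auto
  finally show "norm (D v) \<le> real CARD('n) * B * norm v" by (simp add: mult_ac)
qed

lemma c1_norm_nonneg:
  fixes \<phi> :: "complex^'n \<Rightarrow> complex"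
  assumes holo: "holo_on (ball 0 1) \<phi>" and \<rho>: "0 < \<rho>" "\<rho> < 1"
  shows "0 \<le> c1_norm \<rho> \<phi>"
proof -
  define s where "s = (1 - \<rho>) / 2"
  have "0 < s" "\<rho> + s < 1" unfolding s_def using \<rho> by (simp_all add: field_simps)
  then have s: "0 < s" "cball 0 (\<rho> + s) \<subseteq> ball (0::complex^'n) 1" by auto
  have "compact (\<phi> ` cball 0 (\<rho> + s))"
    using holo_on_imp_continuous_on[OF holo] s by (intro compact_continuous_image) (auto elim: continuous_on_subset)
  then obtain M where M: "\<And>w. w \<in> cball 0 (\<rho> + s) \<Longrightarrow> norm (\<phi> w) \<le> M"
    using compact_imp_bounded bounded_iff by (metis imageI)
  have onorm: "0 \<le> onorm (frechet_derivative \<phi> (at z))"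
    "onorm (frechet_derivative \<phi> (at z)) \<le> real CARD('n) * (M / s)" if z: "z \<in> cball 0 \<rho>" for z
  proof -
    have "cball z s \<subseteq> cball 0 (\<rho> + s)"
    proof
      fix x assume "x \<in> cball z s"
      then have "norm (x - z) \<le> s" by (simp add: dist_norm norm_minus_commute)
      then show "x \<in> cball 0 (\<rho> + s)" using z norm_triangle_sub[of x z] by simp
    qed
    moreover obtain D where D: "(\<phi> has_derivative D) (at z)" "\<forall>c v. D (c *s v) = c * D v"
      using holo z \<rho> unfolding holo_on_def by fastforce
    ultimately have "onorm D \<le> real CARD('n) * (M / s)"
      using s M by (intro onorm_le_of_partial_derivatives has_derivative_linear[OF D(1)] D(2)
          norm_partial_derivative_le[OF holo]) auto
    moreover have "0 \<le> onorm D" using has_derivative_bounded_linear[OF D(1)] by (rule onorm_pos_le)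
    ultimately show "0 \<le> onorm (frechet_derivative \<phi> (at z))"
      "onorm (frechet_derivative \<phi> (at z)) \<le> real CARD('n) * (M / s)"
      using frechet_derivative_at[OF D(1)] by simp_all
  qed
  have "0 \<le> norm (\<phi> 0)" by simp
  also have "\<dots> \<le> (SUP z\<in>cball 0 \<rho>. norm (\<phi> z))"
    using \<rho> M s by (intro cSUP_upper bdd_aboveI2[of _ _ M]) auto
  finally have "0 \<le> (SUP z\<in>cball 0 \<rho>. norm (\<phi> z))" .
  moreover have "0 \<le> (SUP z\<in>cball 0 \<rho>. onorm (frechet_derivative \<phi> (at z)))"
    using \<rho> onorm by (intro order_trans[OF _ cSUP_upper[of 0]] bdd_aboveI2) auto
  ultimately show ?thesis unfolding c1_norm_def by simp
qed

lemma open_A_set: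
  fixes \<phi> :: "complex^'n \<Rightarrow> complex"
  assumes holo: "holo_on (ball 0 1) \<phi>" and p: "0 < p"
  shows "open (A_set p \<alpha> \<phi> t)"
proof -
  have "\<forall>z\<in>ball (0::complex^'n) 1. 0 < 1 - (norm z)^2" by (auto simp: abs_square_less_1)
  then have "continuous_on (ball (0::complex^'n) 1) (u_fun p \<alpha> \<phi>)"
    unfolding u_fun_def[abs_def] using holo_on_imp_continuous_on[OF holo] p
    by (intro continuous_on_mult continuous_on_powr' continuous_on_powr continuous_intros) auto
  then have "open (ball 0 1 \<inter> u_fun p \<alpha> \<phi> -` {t<..})"
    by (rule continuous_open_preimage) auto
  moreover have "A_set p \<alpha> \<phi> t = ball 0 1 \<inter> u_fun p \<alpha> \<phi> -` {t<..}"
    unfolding A_set_def by auto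
  ultimately show ?thesis by simp
qed

lemma w1inf_le_imp_abs_le:
  assumes "w1inf_le g M" "\<omega> \<in> sphere 0 1"
  shows "\<bar>g \<omega>\<bar> \<le> M"
proof -
  obtain a b where ab: "a + b \<le> M" "\<forall>\<omega>\<in>sphere 0 1. \<bar>g \<omega>\<bar> \<le> a"
    "\<forall>\<omega>\<in>sphere 0 1. \<forall>\<omega>'\<in>sphere 0 1. \<bar>g \<omega> - g \<omega>'\<bar> \<le> b * dist \<omega> \<omega>'"
    using assms(1) unfolding w1inf_le_def by blast
  have "dist \<omega> (- \<omega>) = 2"
    using assms(2) by (simp add: dist_norm scaleR_2[symmetric] del: scaleR_2)
  moreover have "\<bar>g \<omega> - g (- \<omega>)\<bar> \<le> b * dist \<omega> (- \<omega>)" using ab(3) assms(2) by simp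
  ultimately have "\<bar>g \<omega> - g (- \<omega>)\<bar> \<le> b * 2" by simp
  then have "0 \<le> b" using abs_ge_zero[of "g \<omega> - g (- \<omega>)"] by linarith
  then show ?thesis using ab(1,2) assms(2) by fastforce
qed

lemma A_set_between_balls:
  fixes \<phi> :: "complex^'n \<Rightarrow> complex" and \<rho>' :: "complex^'n \<Rightarrow> real"
  assumes holo: "holo_on (ball 0 1) \<phi>" and p: "0 < p"
    and fr: "frontier (A_set p \<alpha> \<phi> t) = {\<rho>' \<omega> *\<^sub>R \<omega> | \<omega>. \<omega> \<in> sphere 0 1}"
    and close: "w1inf_le (\<lambda>\<omega>. \<rho>' \<omega> - r) \<delta>" and \<delta>: "0 \<le> \<delta>" "\<delta> < r"
  shows "ball 0 (r - \<delta>) \<subseteq> A_set p \<alpha> \<phi> t" "A_set p \<alpha> \<phi> t \<subseteq> cball 0 (r + \<delta>)"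
proof -
  have A: "open (A_set p \<alpha> \<phi> t)" "A_set p \<alpha> \<phi> t \<subseteq> ball 0 1"
    using open_A_set[OF holo p] unfolding A_set_def by auto
  have bounds: "r - \<delta> \<le> \<rho>' \<omega> \<and> \<rho>' \<omega> \<le> r + \<delta>" if "\<omega> \<in> sphere 0 1" for \<omega>
    using w1inf_le_imp_abs_le[OF close that] by (simp add: abs_le_iff)
  show "ball 0 (r - \<delta>) \<subseteq> A_set p \<alpha> \<phi> t"
    using bounds \<delta> by (intro ball_subset_of_radial_frontier[OF A fr]) auto
  show "A_set p \<alpha> \<phi> t \<subseteq> cball 0 (r + \<delta>)"
    using bounds \<delta> by (intro subset_cball_of_radial_frontier[OF A fr]) force+
qed

lemma mult_le_of_le_divide_add_one:
  fixes K x m :: real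
  assumes "0 \<le> K" "0 \<le> m" "x \<le> m / (K + 1)"
  shows "K * x \<le> m"
proof -
  have "K * x \<le> K * (m / (K + 1))" using assms by (intro mult_left_mono)
  also have "\<dots> \<le> m" using assms by (simp add: field_simps)
  finally show ?thesis .
qed

theorem mainTheorem8:
  fixes p \<alpha> \<rho> \<rho>m \<rho>p K :: real
  assumes "p > 0" and "\<alpha> > real CARD('n)" and "0 < \<rho>" and "\<rho> < 1"
    and "0 < \<rho>m" and "\<rho>m \<le> \<rho>p" and "\<rho>p < \<rho>" and "K \<ge> 0"
  shows "\<exists>\<epsilon>>0. \<exists>C>0. \<forall>(\<phi> :: complex ^ 'n \<Rightarrow> complex) tm tp
           (\<rho>t :: real \<Rightarrow> complex ^ 'n \<Rightarrow> real).
     holo_on (ball 0 1) \<phi> \<and> c1_norm \<rho> \<phi> \<le> \<epsilon> \<and> tm \<le> tp \<and>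
     (\<forall>t\<in>{tm..tp}.
        \<rho>m \<le> rho0 \<alpha> t \<and> rho0 \<alpha> t \<le> \<rho>p \<and>
        frontier (A_set p \<alpha> \<phi> t) = {\<rho>t t \<omega> *\<^sub>R \<omega> | \<omega>. \<omega> \<in> sphere 0 1} \<and>
        (\<forall>\<omega>\<in>sphere 0 1. \<rho>m / 2 \<le> \<rho>t t \<omega> \<and> \<rho>t t \<omega> \<le> (\<rho>p + \<rho>) / 2) \<and>
        w1inf_le (\<lambda>\<omega>. \<rho>t t \<omega> - rho0 \<alpha> t) (K * c1_norm \<rho> \<phi>))
     \<longrightarrow> (\<forall>t\<in>{tm..tp}. norm (Bar (A_set p \<alpha> \<phi> t)) \<le> C * c1_norm \<rho> \<phi>)"
proof -
  have "0 < \<rho>m" "\<rho>m \<le> \<rho>p" "\<rho>p < (\<rho>p + \<rho>) / 2" "(\<rho>p + \<rho>) / 2 < 1" using assms by auto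
  then obtain \<delta>0 C where \<delta>0: "0 < \<delta>0" and C: "0 < C"
    and Bar_le: "\<And>(E :: (complex^'n) set) r \<delta>. E \<in> sets lborel \<Longrightarrow> \<rho>m \<le> r \<Longrightarrow> r \<le> \<rho>p \<Longrightarrow>
      0 \<le> \<delta> \<Longrightarrow> \<delta> \<le> \<delta>0 \<Longrightarrow> ball 0 (r - \<delta>) \<subseteq> E \<Longrightarrow> E \<subseteq> cball 0 (r + \<delta>) \<Longrightarrow> norm (Bar E) \<le> C * \<delta>"
    using norm_Bar_le_shell_width by blast
  define \<epsilon> where "\<epsilon> = min \<delta>0 (\<rho>m / 2) / (K + 1)"
  have bound: "norm (Bar (A_set p \<alpha> \<phi> t)) \<le> (C * K + 1) * c1_norm \<rho> \<phi>"
    if \<phi>: "holo_on (ball 0 1) \<phi>" "c1_norm \<rho> \<phi> \<le> \<epsilon>"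
      and t: "\<rho>m \<le> rho0 \<alpha> t" "rho0 \<alpha> t \<le> \<rho>p" "frontier (A_set p \<alpha> \<phi> t) = {\<rho>' \<omega> *\<^sub>R \<omega> | \<omega>. \<omega> \<in> sphere 0 1}"
        "w1inf_le (\<lambda>\<omega>. \<rho>' \<omega> - rho0 \<alpha> t) (K * c1_norm \<rho> \<phi>)"
    for \<phi> :: "complex^'n \<Rightarrow> complex" and t and \<rho>' :: "complex^'n \<Rightarrow> real"
  proof -
    have c: "0 \<le> c1_norm \<rho> \<phi>" using c1_norm_nonneg[OF \<phi>(1)] assms by simp
    have "K * c1_norm \<rho> \<phi> \<le> min \<delta>0 (\<rho>m / 2)"
      using \<phi>(2) \<delta>0 assms unfolding \<epsilon>_def by (intro mult_le_of_le_divide_add_one) auto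
    then have "norm (Bar (A_set p \<alpha> \<phi> t)) \<le> C * (K * c1_norm \<rho> \<phi>)"
      using A_set_between_balls[OF \<phi>(1) assms(1) t(3,4)] open_A_set[OF \<phi>(1) assms(1)] t c assms
      by (intro Bar_le) (auto simp: borel_open)
    then show ?thesis using C c assms by (simp add: algebra_simps)
  qed
  have \<epsilon>_pos: "0 < \<epsilon>" unfolding \<epsilon>_def using \<delta>0 assms by (intro divide_pos_pos) auto
  have "0 \<le> C * K" using C assms by simp
  then have C'_pos: "0 < C * K + 1" by linarith
  show ?thesis
    apply (rule exI[of _ \<epsilon>], rule conjI[OF \<epsilon>_pos])
    apply (rule exI[of _ "C * K + 1"], rule conjI[OF C'_pos])
    apply (intro allI impI ballI, elim conjE, drule (1) bspec, elim conjE)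
    by (rule bound)
qed

end
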